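(* Let $(X,\mathcal{A},p)$ be a standard Borel probability space and let $n\ge1$ be an integer. For a sub-$\sigma$-algebra $\mathcal{B}\subseteq\mathcal{A}$ let $E_\mathcal{B}:L^n(X,\mathcal{A},p)\to L^n(X,\mathcal{A},p)$, $f\mapsto\mathbb{E}[f\mid\mathcal{B}]$ (a bounded idempotent operator with image $L^n(X,\mathcal{B},p)$). Order bounded idempotent operators on $L^n(X,\mathcal{A},p)$ by $a\le b$ iff $a\circ b=b\circ a=a$. (1) If $(\mathcal{B}_\lambda)_{\lambda\in\Lambda}$ is an increasing filtration (indexed by a directed set) and $\mathcal{B}_\infty=\bigvee_\lambda\mathcal{B}_\lambda$, then $E_{\mathcal{B}_\infty}$ is the supremum of $\{E_{\mathcal{B}_\lambda}\}$ in this order. (2) If $(\mathcal{C}_\lambda)_{\lambda\in\Lambda}$ is a decreasing filtration and $\mathcal{C}_\infty=\bigcap_\lambda\overline{\mathcal{C}_\lambda}$, where $\overline{\mathcal{C}}$ is the $\sigma$-algebra generated by $\mathcal{C}$ and the $p$-null sets of $\mathcal{A}$, then $E_{\mathcal{C}_\infty}$ is the infimum of $\{E_{\mathcal{C}_\lambda}\}$ in this order.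
   Context: $\bigvee_\lambda\mathcal{B}_\lambda$ is the $\sigma$-algebra generated by the union. Increasing filtration: $\mathcal{B}_\lambda\subseteq\mathcal{B}_\mu$ for $\lambda\le\mu$; decreasing: $\mathcal{C}_\lambda\supseteq\mathcal{C}_\mu$ for $\lambda\le\mu$. *)

theory Defs
  imports "HOL-Probability.Probability"
begin

text \<open>Elements of L^n(X,A,p), represented by A-measurable real functions with
  integrable n-th absolute power; two representatives denote the same element
  iff they agree p-almost everywhere.\<close>

definition Lfun :: "'a measure \<Rightarrow> nat \<Rightarrow> ('a \<Rightarrow> real) set" where
  "Lfun M n = {f. f \<in> borel_measurable M \<and> integrable M (\<lambda>x. \<bar>f x\<bar> ^ n)}"

definition Lnorm :: "'a measure \<Rightarrow> nat \<Rightarrow> ('a \<Rightarrow> real) \<Rightarrow> real" where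
  "Lnorm M n f = (\<integral>x. \<bar>f x\<bar> ^ n \<partial>M) powr (1 / real n)"

definition op_eq :: "'a measure \<Rightarrow> nat \<Rightarrow> (('a \<Rightarrow> real) \<Rightarrow> ('a \<Rightarrow> real))
    \<Rightarrow> (('a \<Rightarrow> real) \<Rightarrow> ('a \<Rightarrow> real)) \<Rightarrow> bool" where
  "op_eq M n T S \<longleftrightarrow> (\<forall>f \<in> Lfun M n. AE x in M. T f x = S f x)"

text \<open>Bounded (linear) operator on L^n: a map of representatives which maps L^n
  into L^n, respects a.e. equality (so descends to L^n), is linear modulo a.e.
  equality and is bounded in the L^n norm.\<close>

definition bounded_op :: "'a measure \<Rightarrow> nat \<Rightarrow> (('a \<Rightarrow> real) \<Rightarrow> ('a \<Rightarrow> real)) \<Rightarrow> bool" where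
  "bounded_op M n T \<longleftrightarrow>
     (\<forall>f \<in> Lfun M n. T f \<in> Lfun M n) \<and>
     (\<forall>f \<in> Lfun M n. \<forall>g \<in> Lfun M n. (AE x in M. f x = g x) \<longrightarrow> (AE x in M. T f x = T g x)) \<and>
     (\<forall>f \<in> Lfun M n. \<forall>g \<in> Lfun M n. \<forall>c::real.
        AE x in M. T (\<lambda>y. c * f y + g y) x = c * T f x + T g x) \<and>
     (\<exists>C. \<forall>f \<in> Lfun M n. Lnorm M n (T f) \<le> C * Lnorm M n f)"

definition bounded_idempotent :: "'a measure \<Rightarrow> nat \<Rightarrow> (('a \<Rightarrow> real) \<Rightarrow> ('a \<Rightarrow> real)) \<Rightarrow> bool" where
  "bounded_idempotent M n T \<longleftrightarrow> bounded_op M n T \<and> op_eq M n (T \<circ> T) T"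

definition idem_le :: "'a measure \<Rightarrow> nat \<Rightarrow> (('a \<Rightarrow> real) \<Rightarrow> ('a \<Rightarrow> real))
    \<Rightarrow> (('a \<Rightarrow> real) \<Rightarrow> ('a \<Rightarrow> real)) \<Rightarrow> bool" where
  "idem_le M n a b \<longleftrightarrow> op_eq M n (a \<circ> b) a \<and> op_eq M n (b \<circ> a) a"

definition is_sup_idem :: "'a measure \<Rightarrow> nat \<Rightarrow> (('a \<Rightarrow> real) \<Rightarrow> ('a \<Rightarrow> real)) set
    \<Rightarrow> (('a \<Rightarrow> real) \<Rightarrow> ('a \<Rightarrow> real)) \<Rightarrow> bool" where
  "is_sup_idem M n S s \<longleftrightarrow> bounded_idempotent M n s \<and> (\<forall>a \<in> S. idem_le M n a s) \<and>
     (\<forall>u. bounded_idempotent M n u \<and> (\<forall>a \<in> S. idem_le M n a u) \<longrightarrow> idem_le M n s u)"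

definition is_inf_idem :: "'a measure \<Rightarrow> nat \<Rightarrow> (('a \<Rightarrow> real) \<Rightarrow> ('a \<Rightarrow> real)) set
    \<Rightarrow> (('a \<Rightarrow> real) \<Rightarrow> ('a \<Rightarrow> real)) \<Rightarrow> bool" where
  "is_inf_idem M n S s \<longleftrightarrow> bounded_idempotent M n s \<and> (\<forall>a \<in> S. idem_le M n s a) \<and>
     (\<forall>u. bounded_idempotent M n u \<and> (\<forall>a \<in> S. idem_le M n u a) \<longrightarrow> idem_le M n u s)"

definition cond_exp_op :: "'a measure \<Rightarrow> 'a measure \<Rightarrow> ('a \<Rightarrow> real) \<Rightarrow> ('a \<Rightarrow> real)" where
  "cond_exp_op M B = real_cond_exp M B"

definition directed_set :: "'i set \<Rightarrow> ('i \<Rightarrow> 'i \<Rightarrow> bool) \<Rightarrow> bool" where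
  "directed_set I le \<longleftrightarrow> I \<noteq> {} \<and> (\<forall>i\<in>I. le i i) \<and>
     (\<forall>i\<in>I. \<forall>j\<in>I. \<forall>k\<in>I. le i j \<and> le j k \<longrightarrow> le i k) \<and>
     (\<forall>i\<in>I. \<forall>j\<in>I. \<exists>k\<in>I. le i k \<and> le j k)"

definition join_sa :: "'a measure \<Rightarrow> 'i set \<Rightarrow> ('i \<Rightarrow> 'a measure) \<Rightarrow> 'a measure" where
  "join_sa M I B = sigma (space M) (\<Union>i\<in>I. sets (B i))"

definition null_closure :: "'a measure \<Rightarrow> 'a measure \<Rightarrow> 'a set set" where
  "null_closure M C = sigma_sets (space M) (sets C \<union> null_sets M)"

definition meet_closure_sa :: "'a measure \<Rightarrow> 'i set \<Rightarrow> ('i \<Rightarrow> 'a measure) \<Rightarrow> 'a measure" where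
  "meet_closure_sa M I C = sigma (space M) (\<Inter>i\<in>I. null_closure M (C i))"

end

theory Submission
  imports Defs
begin

text \<open>
  Supremum: an upper bound \<open>u\<close> of all \<open>E_B\<lambda>\<close> fixes the indicator of every set in the
  Int-stable generator \<open>\<Union>\<lambda>. B\<lambda>\<close> of \<open>B\<infinity>\<close>; a Dynkin argument, approximation by simple
  functions and continuity of \<open>u\<close> show that it fixes every \<open>B\<infinity>\<close>-measurable function in
  \<open>L\<^sup>n\<close>, i.e. \<open>u \<circ> E_B\<infinity> = E_B\<infinity>\<close>. Conversely, \<open>E_B\<lambda> (u f - f) = 0\<close> for all \<open>\<lambda>\<close> says that
  \<open>u f - f\<close> integrates to zero over the generator, hence over \<open>B\<infinity>\<close>, so \<open>E_B\<infinity> \<circ> u = E_B\<infinity>\<close>.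

  Infimum: the heart is reverse martingale convergence along the directed set,
  \<open>E_C\<lambda> f \<longrightarrow> E_C\<infinity> f\<close> in \<open>L\<^sup>n\<close>. For bounded \<open>f\<close>, Pythagoras makes \<open>\<parallel>E_C\<lambda> f\<parallel>\<^sub>2\<^sup>2\<close>
  decrease along \<open>\<lambda>\<close>, with decrements \<open>\<parallel>E_C\<lambda> f - E_C\<mu> f\<parallel>\<^sub>2\<^sup>2\<close>; so a chain approaching
  the infimum is fast \<open>L\<^sup>2\<close>-Cauchy and converges almost everywhere. Its limit is fixed by
  every \<open>E_C\<lambda>\<close>, hence measurable for every completed \<open>C\<lambda>\<close> and thus for \<open>C\<infinity>\<close>, which
  identifies it as \<open>E_C\<infinity> f\<close>. Boundedness turns \<open>L\<^sup>2\<close> into \<open>L\<^sup>n\<close> convergence, and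
  truncation removes the boundedness assumption. A lower bound \<open>u\<close> then satisfies
  \<open>u f = u (E_C\<lambda> f) \<longrightarrow> u (E_C\<infinity> f)\<close>, while \<open>u f\<close>, being fixed by every \<open>E_C\<lambda>\<close>, is
  \<open>C\<infinity>\<close>-measurable.
\<close>

lemma convex_on_abs_power: "convex_on UNIV (\<lambda>x::real. \<bar>x\<bar> ^ m)"
proof -
  have cp: "convex_on {0::real..} (\<lambda>x. x ^ m)"
  proof (cases "even m")
    case True
    then show ?thesis using convex_power_even convex_on_subset by blast
  qed (use convex_power_odd in blast)
  show ?thesis
  proof (rule convex_onI)
    fix t x y :: real assume t: "0 < t" "t < 1"
    have "\<bar>(1 - t) * x + t * y\<bar> ^ m \<le> ((1 - t) * \<bar>x\<bar> + t * \<bar>y\<bar>) ^ m"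
      using t by (intro power_mono) (auto intro!: order.trans[OF abs_triangle_ineq] simp: abs_mult)
    also have "\<dots> \<le> (1 - t) * \<bar>x\<bar> ^ m + t * \<bar>y\<bar> ^ m"
      using convex_onD[OF cp, of t "\<bar>x\<bar>" "\<bar>y\<bar>"] t by auto
    finally show "\<bar>(1 - t) *\<^sub>R x + t *\<^sub>R y\<bar> ^ m \<le> (1 - t) * \<bar>x\<bar> ^ m + t * \<bar>y\<bar> ^ m" by simp
  qed simp
qed

lemma abs_add_power_le:
  fixes a b :: real
  shows "\<bar>a + b\<bar> ^ m \<le> 2 ^ m * (\<bar>a\<bar> ^ m + \<bar>b\<bar> ^ m)"
proof -
  have "\<bar>a + b\<bar> ^ m \<le> (2 * max \<bar>a\<bar> \<bar>b\<bar>) ^ m"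
    by (rule power_mono) auto
  also have "\<dots> = 2 ^ m * (max \<bar>a\<bar> \<bar>b\<bar>) ^ m" by (simp add: power_mult_distrib)
  also have "(max \<bar>a\<bar> \<bar>b\<bar>) ^ m \<le> \<bar>a\<bar> ^ m + \<bar>b\<bar> ^ m"
    by (cases "\<bar>a\<bar> \<le> \<bar>b\<bar>") (auto simp: max_def)
  finally show ?thesis by simp
qed

lemma abs_mult_le_sum_squares: "\<bar>a * b\<bar> \<le> a\<^sup>2 + b\<^sup>2" for a b :: real
proof -
  have "2 * (\<bar>a\<bar> * \<bar>b\<bar>) \<le> a\<^sup>2 + b\<^sup>2"
    using sum_squares_bound[of "\<bar>a\<bar>" "\<bar>b\<bar>"] by (simp add: mult.assoc)
  moreover have "0 \<le> \<bar>a\<bar> * \<bar>b\<bar>" by simp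
  ultimately show ?thesis unfolding abs_mult by linarith
qed

lemma abs_power_le_split:
  fixes y S \<delta> :: real
  assumes y: "\<bar>y\<bar> \<le> S" and \<delta>: "0 < \<delta>"
  shows "\<bar>y\<bar> ^ m \<le> \<delta> ^ m + S ^ m * (y\<^sup>2 / \<delta>\<^sup>2)"
proof (cases "\<bar>y\<bar> \<le> \<delta>")
  case True
  have "\<bar>y\<bar> ^ m \<le> \<delta> ^ m" using True by (intro power_mono) simp_all
  moreover have "0 \<le> S ^ m * (y\<^sup>2 / \<delta>\<^sup>2)" using y by simp
  ultimately show ?thesis by linarith
next
  case False
  have "\<bar>y\<bar> ^ m \<le> S ^ m" using y by (intro power_mono) simp_all
  also have "\<dots> \<le> S ^ m * (y\<^sup>2 / \<delta>\<^sup>2)"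
  proof -
    have "\<delta>\<^sup>2 \<le> \<bar>y\<bar>\<^sup>2" using False \<delta> by (intro power_mono) simp_all
    then have "1 \<le> y\<^sup>2 / \<delta>\<^sup>2" using \<delta> by simp
    moreover have "0 \<le> S ^ m" using y by simp
    ultimately show ?thesis using mult_left_mono[of 1 "y\<^sup>2 / \<delta>\<^sup>2" "S ^ m"] by simp
  qed
  finally show ?thesis using zero_le_power[of \<delta> m] \<delta> by linarith
qed

lemma directed_set_chain_approaching_Inf:
  fixes a :: "'i \<Rightarrow> real"
  assumes I: "directed_set I le"
    and antimono: "\<And>i j. i \<in> I \<Longrightarrow> j \<in> I \<Longrightarrow> le i j \<Longrightarrow> a j \<le> a i"
    and bdd: "bdd_below (a ` I)" and \<epsilon>: "\<And>k. 0 < \<epsilon> k"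
  obtains s where "\<And>k. s k \<in> I" "\<And>k. le (s k) (s (Suc k))" "\<And>k. a (s k) < Inf (a ` I) + \<epsilon> k"
proof -
  have "I \<noteq> {}" using I by (simp add: directed_set_def)
  then have near: "\<exists>i\<in>I. a i < Inf (a ` I) + \<epsilon> k" for k
    using cInf_less_iff[of "a ` I" "Inf (a ` I) + \<epsilon> k"] bdd \<epsilon>[of k] by auto
  have "\<exists>s. \<forall>k. (s k \<in> I \<and> a (s k) < Inf (a ` I) + \<epsilon> k) \<and> le (s k) (s (Suc k))"
  proof (rule dependent_nat_choice)
    show "\<exists>i. i \<in> I \<and> a i < Inf (a ` I) + \<epsilon> 0" using near by blast
  next
    fix i k assume i: "i \<in> I \<and> a i < Inf (a ` I) + \<epsilon> k"
    obtain \<mu> where \<mu>: "\<mu> \<in> I" "a \<mu> < Inf (a ` I) + \<epsilon> (Suc k)" using near by blast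
    obtain \<nu> where \<nu>: "\<nu> \<in> I" "le i \<nu>" "le \<mu> \<nu>"
      using I i \<mu>(1) unfolding directed_set_def by blast
    have "a \<nu> < Inf (a ` I) + \<epsilon> (Suc k)" using antimono[OF \<mu>(1) \<nu>(1,3)] \<mu>(2) by linarith
    then show "\<exists>j. (j \<in> I \<and> a j < Inf (a ` I) + \<epsilon> (Suc k)) \<and> le i j" using \<nu> by blast
  qed
  then show ?thesis using that by blast
qed

lemma set_integral_eq_0_sigma_sets:
  fixes \<phi> :: "'a \<Rightarrow> real"
  assumes \<phi>: "integrable M \<phi>" and G: "G \<subseteq> sets M" "Int_stable G"
    and space: "(\<integral>x. \<phi> x \<partial>M) = 0"
    and gen: "\<And>A. A \<in> G \<Longrightarrow> (\<integral>x\<in>A. \<phi> x \<partial>M) = 0"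
    and A: "A \<in> sigma_sets (space M) G"
  shows "(\<integral>x\<in>A. \<phi> x \<partial>M) = 0"
proof -
  have sub: "sigma_sets (space M) G \<subseteq> sets M" by (rule sets.sigma_sets_subset[OF G(1)])
  have si: "set_integrable M B \<phi>" if "B \<in> sets M" for B
    unfolding set_integrable_def using that \<phi> by (rule integrable_mult_indicator)
  have "G \<subseteq> Pow (space M)" using G(1) sets.sets_into_space by blast
  from G(2) this A show ?thesis
  proof (induction rule: sigma_sets_induct_disjoint)
    case (basic A)
    then show ?case by (rule gen)
  next
    case empty
    then show ?case by (simp add: set_lebesgue_integral_def)
  next
    case (compl A)
    have AM: "A \<in> sets M" using compl(1) sub by blast
    have "(\<integral>x\<in>(space M - A) \<union> A. \<phi> x \<partial>M) = (\<integral>x\<in>space M - A. \<phi> x \<partial>M) + (\<integral>x\<in>A. \<phi> x \<partial>M)"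
      using AM by (intro set_integral_Un si) auto
    moreover have "(space M - A) \<union> A = space M" using sets.sets_into_space[OF AM] by blast
    ultimately show ?case using compl(2) set_integral_space[OF \<phi>] space by simp
  next
    case (union A)
    have AM: "A i \<in> sets M" for i using union(2) sub by blast
    have "(\<integral>x\<in>(\<Union>i. A i). \<phi> x \<partial>M) = (\<Sum>i. (\<integral>x\<in>A i. \<phi> x \<partial>M))"
      using AM union(1) by (intro lebesgue_integral_countable_add si) (auto simp: disjoint_family_on_def)
    then show ?case using union(3) by simp
  qed
qed

lemma AE_convergent_if_summable_integral_abs_diff:
  fixes h :: "nat \<Rightarrow> 'a \<Rightarrow> real"
  assumes int: "\<And>k. integrable M (\<lambda>x. h k x - h (Suc k) x)"
    and sum: "summable (\<lambda>k. \<integral>x. \<bar>h k x - h (Suc k) x\<bar> \<partial>M)"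
  shows "AE x in M. convergent (\<lambda>k. h k x)"
proof -
  define d where "d k x = h k x - h (Suc k) x" for k x
  have m: "(\<lambda>x. ennreal \<bar>d k x\<bar>) \<in> borel_measurable M" for k
    using borel_measurable_integrable[OF int[of k]] unfolding d_def by measurable
  have "(\<integral>\<^sup>+ x. (\<Sum>k. ennreal \<bar>d k x\<bar>) \<partial>M) = (\<Sum>k. \<integral>\<^sup>+ x. ennreal \<bar>d k x\<bar> \<partial>M)"
    by (rule nn_integral_suminf[OF m])
  also have "\<dots> = (\<Sum>k. ennreal (\<integral>x. \<bar>d k x\<bar> \<partial>M))"
  proof (rule suminf_cong)
    show "(\<integral>\<^sup>+ x. ennreal \<bar>d k x\<bar> \<partial>M) = ennreal (\<integral>x. \<bar>d k x\<bar> \<partial>M)" for k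
      using int[of k] unfolding d_def by (intro nn_integral_eq_integral) simp_all
  qed
  also have "\<dots> = ennreal (\<Sum>k. \<integral>x. \<bar>d k x\<bar> \<partial>M)"
    using sum unfolding d_def by (intro suminf_ennreal2 integral_nonneg) simp_all
  finally have "(\<integral>\<^sup>+ x. (\<Sum>k. ennreal \<bar>d k x\<bar>) \<partial>M) \<noteq> \<infinity>"
    by (metis ennreal_neq_top infinity_ennreal_def)
  then have "AE x in M. (\<Sum>k. ennreal \<bar>d k x\<bar>) \<noteq> \<infinity>"
    by (intro nn_integral_PInf_AE) (use m in measurable)
  then show ?thesis
  proof eventually_elim
    case (elim x)
    have "summable (\<lambda>k. norm (d k x))"
      by (rule summable_suminf_not_top) (use elim in simp_all)
    then have "(\<lambda>m. \<Sum>k<m. d k x) \<longlonglongrightarrow> (\<Sum>k. d k x)"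
      by (rule summable_LIMSEQ[OF summable_norm_cancel])
    moreover have "(\<Sum>k<m. d k x) = h 0 x - h m x" for m
      unfolding d_def by (rule sum_lessThan_telescope')
    ultimately have "(\<lambda>m. h 0 x - (h 0 x - h m x)) \<longlonglongrightarrow> h 0 x - (\<Sum>k. d k x)"
      by (intro tendsto_diff tendsto_const) simp
    then show ?case unfolding convergent_def by auto
  qed
qed

lemma (in prob_space) subalgebra_sigma_finite:
  assumes "subalgebra M F"
  shows "sigma_finite_subalgebra M F"
  by (intro finite_measure_subalgebra_is_sigma_finite)
    (simp add: assms finite_measure_axioms finite_measure_subalgebra_axioms_def
      finite_measure_subalgebra_def)

lemma (in prob_space) cond_exp_abs_le_const:
  assumes F: "subalgebra M F" and g: "g \<in> borel_measurable M" "AE x in M. \<bar>g x\<bar> \<le> T"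
  shows "AE x in M. \<bar>real_cond_exp M F g x\<bar> \<le> T"
proof -
  interpret sigma_finite_subalgebra M F by (rule subalgebra_sigma_finite[OF F])
  have gi: "integrable M g" using g by (intro integrable_const_bound[where B=T]) auto
  have "AE x in M. real_cond_exp M F g x \<le> T"
    by (rule real_cond_exp_le_c[OF gi]) (use g(2) in \<open>auto elim: eventually_mono\<close>)
  moreover have "AE x in M. real_cond_exp M F g x \<ge> - T"
    by (rule real_cond_exp_ge_c[OF gi]) (use g(2) in \<open>auto elim: eventually_mono\<close>)
  ultimately show ?thesis by eventually_elim simp
qed

lemma (in prob_space) square_integral_abs_le:
  fixes d :: "'a \<Rightarrow> real"
  assumes "d \<in> borel_measurable M" "integrable M (\<lambda>x. (d x)\<^sup>2)"
  shows "(\<integral>x. \<bar>d x\<bar> \<partial>M)\<^sup>2 \<le> (\<integral>x. (d x)\<^sup>2 \<partial>M)"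
proof -
  have "integrable M (\<lambda>x. \<bar>d x\<bar>)"
    using square_integrable_imp_integrable[OF assms] by simp
  then show ?thesis
    using variance_eq[of "\<lambda>x. \<bar>d x\<bar>"] variance_positive[of "\<lambda>x. \<bar>d x\<bar>"] assms(2) by simp
qed

section \<open>Absolute moments and the space \<open>L\<^sup>n\<close>\<close>

text \<open>\<open>abs_moment M n f = Lnorm M n f ^ n\<close>; dropping the root costs only the constant \<open>2 ^ n\<close>
  in the triangle inequality (\<open>abs_moment_add_le\<close>).\<close>

definition abs_moment :: "'a measure \<Rightarrow> nat \<Rightarrow> ('a \<Rightarrow> real) \<Rightarrow> real" where
  "abs_moment M n f = (\<integral>x. \<bar>f x\<bar> ^ n \<partial>M)"

lemma abs_moment_nonneg: "0 \<le> abs_moment M n f"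
  unfolding abs_moment_def by (rule Bochner_Integration.integral_nonneg) simp

lemma abs_moment_cmult: "abs_moment M n (\<lambda>x. c * f x) = \<bar>c\<bar> ^ n * abs_moment M n f"
  unfolding abs_moment_def by (simp add: abs_mult power_mult_distrib)

lemma abs_moment_diff_commute: "abs_moment M n (\<lambda>x. f x - g x) = abs_moment M n (\<lambda>x. g x - f x)"
  unfolding abs_moment_def by (simp add: abs_minus_commute)

lemma abs_moment_cong_AE:
  assumes "f \<in> borel_measurable M" "g \<in> borel_measurable M" "AE x in M. f x = g x"
  shows "abs_moment M n f = abs_moment M n g"
  unfolding abs_moment_def using assms by (intro integral_cong_AE) (auto elim: eventually_mono)

locale Ln_prob_space = prob_space +
  fixes n :: nat
  assumes one_le_n: "1 \<le> n"
begin

lemma Lfun_borel: "f \<in> Lfun M n \<Longrightarrow> f \<in> borel_measurable M"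
  by (simp add: Lfun_def)

lemma Lfun_integrable_power: "f \<in> Lfun M n \<Longrightarrow> integrable M (\<lambda>x. \<bar>f x\<bar> ^ n)"
  by (simp add: Lfun_def)

lemma Lfun_integrable:
  assumes f: "f \<in> Lfun M n"
  shows "integrable M f"
proof (rule Bochner_Integration.integrable_bound[where f="\<lambda>x. 1 + \<bar>f x\<bar> ^ n"])
  show "integrable M (\<lambda>x. 1 + \<bar>f x\<bar> ^ n)"
    using Lfun_integrable_power[OF f] by simp
  have "\<bar>y\<bar> \<le> 1 + \<bar>y\<bar> ^ n" for y :: real
  proof (cases "\<bar>y\<bar> \<le> 1")
    case False
    then have "\<bar>y\<bar> ^ 1 \<le> \<bar>y\<bar> ^ n" by (intro power_increasing one_le_n) auto
    then show ?thesis by simp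
  qed (simp add: add_increasing2)
  then show "AE x in M. norm (f x) \<le> norm (1 + \<bar>f x\<bar> ^ n)"
    by (intro AE_I2) (simp add: add_nonneg_nonneg)
qed (rule Lfun_borel[OF f])

lemma Lfun_lincomb:
  assumes f: "f \<in> Lfun M n" and g: "g \<in> Lfun M n"
  shows "(\<lambda>x. c * f x + g x) \<in> Lfun M n"
proof -
  have [measurable]: "f \<in> borel_measurable M" "g \<in> borel_measurable M"
    using f g by (simp_all add: Lfun_borel)
  have "integrable M (\<lambda>x. \<bar>c * f x + g x\<bar> ^ n)"
  proof (rule Bochner_Integration.integrable_bound
      [where f="\<lambda>x. 2 ^ n * (\<bar>c\<bar> ^ n * \<bar>f x\<bar> ^ n + \<bar>g x\<bar> ^ n)"])
    show "integrable M (\<lambda>x. 2 ^ n * (\<bar>c\<bar> ^ n * \<bar>f x\<bar> ^ n + \<bar>g x\<bar> ^ n))"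
      using f g by (intro integrable_mult_right Bochner_Integration.integrable_add)
        (simp_all add: Lfun_integrable_power)
    show "AE x in M. norm (\<bar>c * f x + g x\<bar> ^ n) \<le> norm (2 ^ n * (\<bar>c\<bar> ^ n * \<bar>f x\<bar> ^ n + \<bar>g x\<bar> ^ n))"
      using abs_add_power_le[of "c * f _" "g _" n]
      by (intro AE_I2) (simp add: abs_mult power_mult_distrib)
  qed measurable
  then show ?thesis by (simp add: Lfun_def)
qed

lemma Lfun_bounded:
  assumes "f \<in> borel_measurable M" "AE x in M. \<bar>f x\<bar> \<le> K"
  shows "f \<in> Lfun M n"
proof -
  have "AE x in M. norm (\<bar>f x\<bar> ^ n) \<le> K ^ n"
    using assms(2)
  proof eventually_elim
    case (elim x)
    then have "\<bar>f x\<bar> ^ n \<le> K ^ n" by (intro power_mono) auto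
    then show ?case by simp
  qed
  then have "integrable M (\<lambda>x. \<bar>f x\<bar> ^ n)"
    using assms(1) by (intro integrable_const_bound[where B="K ^ n"]) auto
  then show ?thesis using assms(1) by (simp add: Lfun_def)
qed

lemma Lfun_cong_AE:
  assumes "f \<in> Lfun M n" "g \<in> borel_measurable M" "AE x in M. f x = g x"
  shows "g \<in> Lfun M n"
proof -
  have "integrable M (\<lambda>x. \<bar>g x\<bar> ^ n)"
  proof (rule integrable_cong_AE_imp[OF Lfun_integrable_power[OF assms(1)]])
    show "AE x in M. \<bar>f x\<bar> ^ n = \<bar>g x\<bar> ^ n" using assms(3) by eventually_elim simp
  qed (use assms(2) in measurable)
  then show ?thesis using assms(2) by (simp add: Lfun_def)
qed

lemma Lfun_zero: "(\<lambda>x. 0) \<in> Lfun M n"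
  by (rule Lfun_bounded[where K=0]) simp_all

lemma Lfun_cmult: "f \<in> Lfun M n \<Longrightarrow> (\<lambda>x. c * f x) \<in> Lfun M n"
  using Lfun_lincomb[OF _ Lfun_zero, of f c] by simp

lemma Lfun_add: "f \<in> Lfun M n \<Longrightarrow> g \<in> Lfun M n \<Longrightarrow> (\<lambda>x. f x + g x) \<in> Lfun M n"
  using Lfun_lincomb[of f g 1] by simp

lemma Lfun_diff: "f \<in> Lfun M n \<Longrightarrow> g \<in> Lfun M n \<Longrightarrow> (\<lambda>x. f x - g x) \<in> Lfun M n"
  using Lfun_lincomb[of g f "-1"] by simp

lemma Lfun_indicator: "A \<in> sets M \<Longrightarrow> (indicator A :: 'a \<Rightarrow> real) \<in> Lfun M n"
  by (rule Lfun_bounded[where K=1]) (auto simp: indicator_def)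

lemma Lnorm_power: "Lnorm M n f ^ n = abs_moment M n f"
proof -
  have n0: "n \<noteq> 0" using one_le_n by simp
  have "Lnorm M n f ^ n = Lnorm M n f powr real n"
    unfolding Lnorm_def by (rule powr_realpow'[symmetric]) (simp_all add: n0)
  also have "\<dots> = abs_moment M n f"
    unfolding Lnorm_def abs_moment_def[symmetric] powr_powr
    using n0 abs_moment_nonneg[of M n f] by simp
  finally show ?thesis .
qed

lemma abs_moment_indicator:
  assumes "A \<in> sets M"
  shows "abs_moment M n (indicator A) = measure M A"
proof -
  have "\<bar>indicator A x\<bar> ^ n = (indicator A x :: real)" for x
    using one_le_n by (simp add: indicator_def)
  then show ?thesis using assms by (simp add: abs_moment_def)
qed

lemma abs_moment_add_le:
  assumes f: "f \<in> Lfun M n" and g: "g \<in> Lfun M n"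
  shows "abs_moment M n (\<lambda>x. f x + g x) \<le> 2 ^ n * (abs_moment M n f + abs_moment M n g)"
proof -
  have "abs_moment M n (\<lambda>x. f x + g x) \<le> (\<integral>x. 2 ^ n * (\<bar>f x\<bar> ^ n + \<bar>g x\<bar> ^ n) \<partial>M)"
    unfolding abs_moment_def
  proof (rule integral_mono)
    show "integrable M (\<lambda>x. \<bar>f x + g x\<bar> ^ n)"
      using Lfun_add[OF f g] by (rule Lfun_integrable_power)
    show "integrable M (\<lambda>x. 2 ^ n * (\<bar>f x\<bar> ^ n + \<bar>g x\<bar> ^ n))"
      using f g by (simp add: Lfun_integrable_power)
  qed (rule abs_add_power_le)
  also have "\<dots> = 2 ^ n * (abs_moment M n f + abs_moment M n g)"
    unfolding abs_moment_def using f g by (simp add: Lfun_integrable_power)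
  finally show ?thesis .
qed

lemma abs_moment_diff_le:
  assumes f: "f \<in> Lfun M n" and g: "g \<in> Lfun M n"
  shows "abs_moment M n (\<lambda>x. f x - g x) \<le> 2 ^ n * (abs_moment M n f + abs_moment M n g)"
proof -
  have "abs_moment M n (\<lambda>x. f x - g x) = abs_moment M n (\<lambda>x. f x + (-1) * g x)"
    by simp
  also have "\<dots> \<le> 2 ^ n * (abs_moment M n f + abs_moment M n (\<lambda>x. (-1) * g x))"
    by (rule abs_moment_add_le[OF f Lfun_cmult[OF g]])
  finally show ?thesis unfolding abs_moment_cmult by simp
qed

lemma AE_eq_0_if_abs_moment_le_0:
  assumes "f \<in> Lfun M n" "abs_moment M n f \<le> 0"
  shows "AE x in M. f x = 0"
proof -
  have "abs_moment M n f = 0" using assms(2) abs_moment_nonneg[of M n f] by linarith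
  then have "AE x in M. \<bar>f x\<bar> ^ n = 0"
    using integral_nonneg_eq_0_iff_AE[OF Lfun_integrable_power[OF assms(1)]]
    unfolding abs_moment_def by simp
  then show ?thesis by eventually_elim simp
qed

lemma AE_eq_0_if_abs_moment_arbitrarily_small:
  assumes "f \<in> Lfun M n" "\<And>e. 0 < e \<Longrightarrow> abs_moment M n f \<le> c * e"
  shows "AE x in M. f x = 0"
proof (rule AE_eq_0_if_abs_moment_le_0[OF assms(1)], rule ccontr)
  assume "\<not> abs_moment M n f \<le> 0"
  then have pos: "0 < abs_moment M n f" by linarith
  define e where "e = abs_moment M n f / (\<bar>c\<bar> + 1)"
  have e: "0 < e" unfolding e_def using pos by (intro divide_pos_pos) auto
  have "abs_moment M n f \<le> c * e" using assms(2)[OF e] .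
  also have "\<dots> \<le> \<bar>c\<bar> * e" using e by (intro mult_right_mono) auto
  also have "\<dots> = abs_moment M n f * (\<bar>c\<bar> / (\<bar>c\<bar> + 1))" unfolding e_def by simp
  also have "\<dots> < abs_moment M n f * 1" using pos by (intro mult_strict_left_mono) auto
  finally show False by simp
qed

lemma abs_moment_dominated_convergence:
  assumes [measurable]: "\<And>k. h k \<in> borel_measurable M" "H \<in> borel_measurable M"
    and lim: "AE x in M. (\<lambda>k. h k x) \<longlonglongrightarrow> H x"
    and w: "w \<in> Lfun M n" and dom: "\<And>k. AE x in M. \<bar>h k x\<bar> \<le> w x"
  shows "(\<lambda>k. abs_moment M n (\<lambda>x. h k x - H x)) \<longlonglongrightarrow> 0"
proof -
  have "AE x in M. \<forall>k. \<bar>h k x\<bar> \<le> w x" using dom by (simp add: AE_all_countable)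
  then have domH: "AE x in M. \<bar>H x\<bar> \<le> w x"
    using lim
  proof eventually_elim
    case (elim x)
    show ?case using tendsto_rabs[OF elim(2)] by (rule LIMSEQ_le_const2) (use elim(1) in blast)
  qed
  have "(\<lambda>k. \<integral>x. \<bar>h k x - H x\<bar> ^ n \<partial>M) \<longlonglongrightarrow> (\<integral>x. \<bar>H x - H x\<bar> ^ n \<partial>M)"
  proof (rule integral_dominated_convergence[where w="\<lambda>x. 2 ^ n * \<bar>w x\<bar> ^ n"])
    show "integrable M (\<lambda>x. 2 ^ n * \<bar>w x\<bar> ^ n)"
      using Lfun_integrable_power[OF w] by simp
    show "AE x in M. (\<lambda>k. \<bar>h k x - H x\<bar> ^ n) \<longlonglongrightarrow> \<bar>H x - H x\<bar> ^ n"
      using lim by eventually_elim (intro tendsto_intros)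
    show "AE x in M. norm (\<bar>h k x - H x\<bar> ^ n) \<le> 2 ^ n * \<bar>w x\<bar> ^ n" for k
      using dom[of k] domH
    proof eventually_elim
      case (elim x)
      then have "\<bar>h k x - H x\<bar> ^ n \<le> (2 * \<bar>w x\<bar>) ^ n" by (intro power_mono) auto
      then show ?case by (simp add: power_mult_distrib)
    qed
  qed measurable
  moreover have "0 < n" using one_le_n by simp
  ultimately show ?thesis by (simp add: abs_moment_def power_0_left)
qed

lemma abs_moment_truncation_tendsto:
  assumes f: "f \<in> Lfun M n"
  shows "(\<lambda>m. abs_moment M n (\<lambda>x. max (- real m) (min (real m) (f x)) - f x)) \<longlonglongrightarrow> 0"
proof (rule abs_moment_dominated_convergence)
  show "(\<lambda>x. \<bar>f x\<bar>) \<in> Lfun M n"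
    using Lfun_borel[OF f] Lfun_integrable_power[OF f] by (simp add: Lfun_def borel_measurable_abs)
  show "AE x in M. (\<lambda>m. max (- real m) (min (real m) (f x))) \<longlonglongrightarrow> f x"
  proof (rule AE_I2, rule tendsto_eventually)
    fix x
    obtain N :: nat where "\<bar>f x\<bar> \<le> real N" using real_arch_simple by blast
    then have "max (- real m) (min (real m) (f x)) = f x" if "N \<le> m" for m
      using that by (simp add: max_def min_def abs_le_iff)
    then show "\<forall>\<^sub>F m in sequentially. max (- real m) (min (real m) (f x)) = f x"
      unfolding eventually_sequentially by blast
  qed
  show "AE x in M. \<bar>max (- real m) (min (real m) (f x))\<bar> \<le> \<bar>f x\<bar>" for m
    by (intro AE_I2) (simp add: max_def min_def abs_le_iff; arith)
qed (use Lfun_borel[OF f] in measurable)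

lemma abs_moment_small_if_bounded_L2_small:
  assumes e: "0 < e"
  obtains \<eta> where "0 < \<eta>" "\<And>y. y \<in> borel_measurable M \<Longrightarrow> AE x in M. \<bar>y x\<bar> \<le> S \<Longrightarrow>
    abs_moment M 2 y \<le> \<eta> \<Longrightarrow> abs_moment M n y \<le> e"
proof -
  define \<delta> :: real where "\<delta> = min 1 (e / 2)"
  have \<delta>: "0 < \<delta>" "\<delta> ^ n \<le> e / 2"
  proof -
    show "0 < \<delta>" unfolding \<delta>_def using e by simp
    then have "\<delta> ^ n \<le> \<delta> ^ 1" using one_le_n by (intro power_decreasing) (simp_all add: \<delta>_def)
    then show "\<delta> ^ n \<le> e / 2" unfolding \<delta>_def by simp
  qed
  define \<eta> where "\<eta> = e / 2 * \<delta>\<^sup>2 / (\<bar>S\<bar> ^ n + 1)"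
  have "abs_moment M n y \<le> e"
    if y: "y \<in> borel_measurable M" "AE x in M. \<bar>y x\<bar> \<le> S" "abs_moment M 2 y \<le> \<eta>" for y
  proof -
    have yS: "AE x in M. \<bar>y x\<bar> \<le> \<bar>S\<bar>" using y(2) by eventually_elim simp
    have y2: "integrable M (\<lambda>x. (y x)\<^sup>2)"
      using y(1) yS by (intro integrable_const_bound[where B="S\<^sup>2"])
        (auto elim!: eventually_mono simp: abs_le_square_iff)
    have "abs_moment M n y \<le> (\<integral>x. \<delta> ^ n + \<bar>S\<bar> ^ n * ((y x)\<^sup>2 / \<delta>\<^sup>2) \<partial>M)"
      unfolding abs_moment_def
    proof (rule integral_mono_AE)
      show "integrable M (\<lambda>x. \<bar>y x\<bar> ^ n)" by (rule Lfun_integrable_power[OF Lfun_bounded[OF y(1) yS]])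
      show "integrable M (\<lambda>x. \<delta> ^ n + \<bar>S\<bar> ^ n * ((y x)\<^sup>2 / \<delta>\<^sup>2))" using y2 by simp
      show "AE x in M. \<bar>y x\<bar> ^ n \<le> \<delta> ^ n + \<bar>S\<bar> ^ n * ((y x)\<^sup>2 / \<delta>\<^sup>2)"
        using yS by eventually_elim (rule abs_power_le_split[OF _ \<delta>(1)])
    qed
    also have "\<dots> = \<delta> ^ n + \<bar>S\<bar> ^ n / \<delta>\<^sup>2 * abs_moment M 2 y"
      using y2 by (simp add: abs_moment_def prob_space)
    also have "\<dots> \<le> \<delta> ^ n + \<bar>S\<bar> ^ n / \<delta>\<^sup>2 * \<eta>"
      using y(3) by (intro add_left_mono mult_left_mono) simp_all
    also have "\<bar>S\<bar> ^ n / \<delta>\<^sup>2 * \<eta> = e / 2 * (\<bar>S\<bar> ^ n / (\<bar>S\<bar> ^ n + 1))"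
      unfolding \<eta>_def using \<delta>(1) by (simp add: field_simps)
    also have "\<dots> \<le> e / 2"
      using e by (intro mult_left_le) (simp_all add: divide_le_eq_1 add_nonneg_pos)
    finally show ?thesis using \<delta>(2) by simp
  qed
  moreover have "0 < \<eta>"
    unfolding \<eta>_def using e \<delta>(1) by (intro divide_pos_pos mult_pos_pos add_nonneg_pos) simp_all
  ultimately show ?thesis using that by blast
qed

section \<open>Bounded operators on \<open>L\<^sup>n\<close> and their fixed points\<close>

lemma bounded_op_Lfun: "bounded_op M n u \<Longrightarrow> f \<in> Lfun M n \<Longrightarrow> u f \<in> Lfun M n"
  unfolding bounded_op_def by blast

lemma bounded_op_cong_AE:
  "bounded_op M n u \<Longrightarrow> f \<in> Lfun M n \<Longrightarrow> g \<in> Lfun M n \<Longrightarrow> AE x in M. f x = g x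
    \<Longrightarrow> AE x in M. u f x = u g x"
  unfolding bounded_op_def by blast

lemma bounded_op_lincomb:
  "bounded_op M n u \<Longrightarrow> f \<in> Lfun M n \<Longrightarrow> g \<in> Lfun M n
    \<Longrightarrow> AE x in M. u (\<lambda>y. c * f y + g y) x = c * u f x + u g x"
  unfolding bounded_op_def by blast

lemma bounded_op_diff:
  assumes "bounded_op M n u" "f \<in> Lfun M n" "g \<in> Lfun M n"
  shows "AE x in M. u (\<lambda>y. f y - g y) x = u f x - u g x"
  using bounded_op_lincomb[OF assms(1,3,2), of "-1"] by simp

lemma bounded_op_add:
  assumes "bounded_op M n u" "f \<in> Lfun M n" "g \<in> Lfun M n"
  shows "AE x in M. u (\<lambda>y. f y + g y) x = u f x + u g x"
  using bounded_op_lincomb[OF assms(1,2,3), of 1] by simp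

lemma bounded_op_zero:
  assumes "bounded_op M n u"
  shows "AE x in M. u (\<lambda>y. 0) x = 0"
  using bounded_op_diff[OF assms Lfun_zero Lfun_zero] by simp

lemma bounded_op_cmult:
  assumes "bounded_op M n u" "f \<in> Lfun M n"
  shows "AE x in M. u (\<lambda>y. c * f y) x = c * u f x"
  using bounded_op_lincomb[OF assms Lfun_zero, of c] bounded_op_zero[OF assms(1)]
  by eventually_elim simp

lemma bounded_op_abs_moment_le:
  assumes "bounded_op M n u"
  obtains K where "0 \<le> K" "\<And>f. f \<in> Lfun M n \<Longrightarrow> abs_moment M n (u f) \<le> K * abs_moment M n f"
proof -
  obtain C where C: "\<And>f. f \<in> Lfun M n \<Longrightarrow> Lnorm M n (u f) \<le> C * Lnorm M n f"
    using assms unfolding bounded_op_def by blast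
  have "abs_moment M n (u f) \<le> (max C 0) ^ n * abs_moment M n f" if f: "f \<in> Lfun M n" for f
  proof -
    have "Lnorm M n (u f) \<le> max C 0 * Lnorm M n f"
      using C[OF f] mult_right_mono[OF max.cobounded1[of C 0], of "Lnorm M n f"]
      by (simp add: Lnorm_def)
    then have "Lnorm M n (u f) ^ n \<le> (max C 0 * Lnorm M n f) ^ n"
      by (intro power_mono) (simp_all add: Lnorm_def)
    then show ?thesis by (simp add: power_mult_distrib Lnorm_power)
  qed
  then show ?thesis using that[of "(max C 0) ^ n"] by simp
qed

lemma bounded_op_fixes_limit:
  assumes u: "bounded_op M n u" and f: "f \<in> Lfun M n"
    and approx: "\<And>e. 0 < e \<Longrightarrow>
      \<exists>g\<in>Lfun M n. (AE x in M. u g x = g x) \<and> abs_moment M n (\<lambda>x. f x - g x) \<le> e"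
  shows "AE x in M. u f x = f x"
proof -
  obtain K where K: "0 \<le> K" "\<And>f. f \<in> Lfun M n \<Longrightarrow> abs_moment M n (u f) \<le> K * abs_moment M n f"
    using bounded_op_abs_moment_le[OF u] by blast
  have ufL: "u f \<in> Lfun M n" by (rule bounded_op_Lfun[OF u f])
  have "AE x in M. u f x - f x = 0"
  proof (rule AE_eq_0_if_abs_moment_arbitrarily_small[OF Lfun_diff[OF ufL f]])
    fix e :: real assume e: "0 < e"
    obtain g where g: "g \<in> Lfun M n" "AE x in M. u g x = g x" "abs_moment M n (\<lambda>x. f x - g x) \<le> e"
      using approx[OF e] by blast
    define d where "d x = f x - g x" for x
    have dL: "d \<in> Lfun M n" unfolding d_def by (rule Lfun_diff[OF f g(1)])
    have udL: "u d \<in> Lfun M n" by (rule bounded_op_Lfun[OF u dL])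
    have "AE x in M. u d x = u f x - u g x" unfolding d_def by (rule bounded_op_diff[OF u f g(1)])
    then have "AE x in M. u f x - f x = u d x - d x"
      using g(2) by eventually_elim (simp add: d_def)
    then have "abs_moment M n (\<lambda>x. u f x - f x) = abs_moment M n (\<lambda>x. u d x - d x)"
      using Lfun_borel[OF Lfun_diff[OF ufL f]] Lfun_borel[OF Lfun_diff[OF udL dL]]
      by (intro abs_moment_cong_AE)
    also have "\<dots> \<le> 2 ^ n * (abs_moment M n (u d) + abs_moment M n d)"
      by (rule abs_moment_diff_le[OF udL dL])
    also have "\<dots> \<le> 2 ^ n * ((K + 1) * abs_moment M n d)"
      using K(2)[OF dL] by (intro mult_left_mono) (simp_all add: distrib_right)
    also have "\<dots> \<le> 2 ^ n * ((K + 1) * e)"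
      using g(3) K(1) unfolding d_def by (intro mult_left_mono) simp_all
    finally show "abs_moment M n (\<lambda>x. u f x - f x) \<le> 2 ^ n * (K + 1) * e"
      by (simp add: mult.assoc)
  qed
  then show ?thesis by eventually_elim simp
qed

lemma bounded_op_fixes_sum:
  assumes u: "bounded_op M n u" and S: "finite S"
    and g: "\<And>y. y \<in> S \<Longrightarrow> g y \<in> Lfun M n \<and> (AE x in M. u (g y) x = g y x)"
  shows "(\<lambda>x. \<Sum>y\<in>S. g y x) \<in> Lfun M n \<and> (AE x in M. u (\<lambda>x. \<Sum>y\<in>S. g y x) x = (\<Sum>y\<in>S. g y x))"
  using S g
proof (induction S rule: finite_induct)
  case empty
  then show ?case using bounded_op_zero[OF u] Lfun_zero by simp
next
  case (insert a S)
  have IH: "(\<lambda>x. \<Sum>y\<in>S. g y x) \<in> Lfun M n" "AE x in M. u (\<lambda>x. \<Sum>y\<in>S. g y x) x = (\<Sum>y\<in>S. g y x)"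
    using insert by auto
  have ga: "g a \<in> Lfun M n" "AE x in M. u (g a) x = g a x" using insert(4)[of a] by auto
  have "AE x in M. u (\<lambda>x. g a x + (\<Sum>y\<in>S. g y x)) x = g a x + (\<Sum>y\<in>S. g y x)"
    using bounded_op_add[OF u ga(1) IH(1)] ga(2) IH(2) by eventually_elim simp
  then show ?case using Lfun_add[OF ga(1) IH(1)] insert(1,2) by simp
qed

lemma bounded_op_fixes_indicator_disjoint_UN:
  fixes A :: "nat \<Rightarrow> 'a set"
  assumes u: "bounded_op M n u" and AM: "\<And>i. A i \<in> sets M" and disj: "disjoint_family A"
    and fixes_A: "\<And>i. AE x in M. u (indicator (A i)) x = (indicator (A i) x :: real)"
  shows "AE x in M. u (indicator (\<Union>i. A i)) x = (indicator (\<Union>i. A i) x :: real)"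
proof -
  define U where "U = (\<Union>i. A i)"
  define B where "B N = (\<Union>i<N. A i)" for N
  have UM: "U \<in> sets M" and BM: "B N \<in> sets M" for N unfolding U_def B_def using AM by blast+
  have fixes_B: "AE x in M. u (indicator (B N)) x = (indicator (B N) x :: real)" for N
  proof -
    have "(indicator (B N) :: 'a \<Rightarrow> real) = (\<lambda>x. \<Sum>i<N. indicator (A i) x)"
      unfolding B_def using disj
      by (intro ext indicator_UN_disjoint) (auto simp: disjoint_family_on_def)
    then show ?thesis
      using bounded_op_fixes_sum[OF u, of "{..<N}" "\<lambda>i. indicator (A i)"]
      by (simp add: Lfun_indicator AM fixes_A)
  qed
  have "(\<Union>N. B N) = U" unfolding B_def U_def by blast
  moreover have "incseq B" unfolding B_def incseq_def by (auto intro: less_le_trans)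
  ultimately have "(\<lambda>N. measure M (B N)) \<longlonglongrightarrow> measure M U"
    using finite_Lim_measure_incseq[of B] BM by auto
  then have "(\<lambda>N. measure M U - measure M (B N)) \<longlonglongrightarrow> measure M U - measure M U"
    by (intro tendsto_diff tendsto_const)
  then have lim: "(\<lambda>N. measure M U - measure M (B N)) \<longlonglongrightarrow> 0" by simp
  have moment: "abs_moment M n (\<lambda>x. indicator U x - indicator (B N) x)
      = measure M U - measure M (B N)" for N
  proof -
    have sub: "B N \<subseteq> U" unfolding B_def U_def by blast
    then have "(\<lambda>x. indicator U x - indicator (B N) x) = (indicator (U - B N) :: 'a \<Rightarrow> real)"
      by (auto simp: fun_eq_iff indicator_def)
    then show ?thesis using sub UM BM by (simp add: abs_moment_indicator measure_Diff)
  qed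
  show ?thesis
    unfolding U_def[symmetric]
  proof (rule bounded_op_fixes_limit[OF u Lfun_indicator[OF UM]])
    fix e :: real assume "0 < e"
    then obtain N where "norm (measure M U - measure M (B N) - 0) < e"
      using LIMSEQ_D[OF lim] by blast
    then show "\<exists>g\<in>Lfun M n. (AE x in M. u g x = g x) \<and> abs_moment M n (\<lambda>x. indicator U x - g x) \<le> e"
      using Lfun_indicator[OF BM] fixes_B moment by (intro bexI[of _ "indicator (B N)"]) auto
  qed
qed

lemma bounded_op_fixes_indicator_sigma:
  assumes u: "bounded_op M n u" and G: "G \<subseteq> sets M" "Int_stable G" "space M \<in> G"
    and fixes_G: "\<And>A. A \<in> G \<Longrightarrow> AE x in M. u (indicator A) x = (indicator A x :: real)"
    and A: "A \<in> sigma_sets (space M) G"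
  shows "AE x in M. u (indicator A) x = (indicator A x :: real)"
proof -
  have "G \<subseteq> Pow (space M)" using G(1) sets.sets_into_space by blast
  from G(2) this A show ?thesis
  proof (induction rule: sigma_sets_induct_disjoint)
    case (basic A)
    then show ?case by (rule fixes_G)
  next
    case empty
    then show ?case using bounded_op_zero[OF u] by (simp add: indicator_def[abs_def])
  next
    case (compl A)
    have AM: "A \<in> sets M" using compl(1) sets.sigma_sets_subset[OF G(1)] by blast
    have eq: "(indicator (space M - A) :: 'a \<Rightarrow> real) = (\<lambda>y. indicator (space M) y - indicator A y)"
      using sets.sets_into_space[OF AM] by (auto simp: fun_eq_iff indicator_def)
    have "AE x in M. u (\<lambda>y. indicator (space M) y - indicator A y) x
        = u (indicator (space M)) x - u (indicator A) x"
      using AM by (intro bounded_op_diff[OF u] Lfun_indicator) auto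
    then show ?case
      unfolding eq using compl(2) fixes_G[OF G(3)] by eventually_elim simp
  next
    case (union A)
    then show ?case
      using sets.sigma_sets_subset[OF G(1)] by (intro bounded_op_fixes_indicator_disjoint_UN[OF u]) auto
  qed
qed

lemma bounded_op_fixes_simple:
  assumes u: "bounded_op M n u" and F: "subalgebra M F"
    and fixes_F: "\<And>A. A \<in> sets F \<Longrightarrow> AE x in M. u (indicator A) x = (indicator A x :: real)"
    and s: "simple_function F s"
  shows "s \<in> Lfun M n \<and> (AE x in M. u s x = (s x :: real))"
proof -
  have spF: "space F = space M" and setsF: "sets F \<subseteq> sets M"
    using F by (simp_all add: subalgebra_def)
  define g where "g y = (\<lambda>x. y * indicator (s -` {y} \<inter> space F) x)" for y :: real
  have g: "g y \<in> Lfun M n \<and> (AE x in M. u (g y) x = g y x)" for y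
  proof -
    have AF: "s -` {y} \<inter> space F \<in> sets F" by (rule simple_functionD(2)[OF s])
    then have L: "indicator (s -` {y} \<inter> space F) \<in> Lfun M n"
      using setsF by (intro Lfun_indicator) blast
    have "AE x in M. u (g y) x = y * u (indicator (s -` {y} \<inter> space F)) x"
      unfolding g_def by (rule bounded_op_cmult[OF u L])
    then have "AE x in M. u (g y) x = g y x"
      using fixes_F[OF AF] by eventually_elim (simp add: g_def)
    then show ?thesis using Lfun_cmult[OF L] by (simp add: g_def)
  qed
  have sum: "(\<lambda>x. \<Sum>y\<in>s ` space F. g y x) \<in> Lfun M n \<and>
      (AE x in M. u (\<lambda>x. \<Sum>y\<in>s ` space F. g y x) x = (\<Sum>y\<in>s ` space F. g y x))"
    by (rule bounded_op_fixes_sum[OF u simple_functionD(1)[OF s] g])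
  have "s x = (\<Sum>y\<in>s ` space F. g y x)" if "x \<in> space M" for x
  proof -
    have "s x = (\<Sum>y\<in>s ` space F. indicator (s -` {y} \<inter> space F) x *\<^sub>R y)"
      by (rule simple_function_indicator_representation_banach[OF s]) (simp add: spF that)
    also have "\<dots> = (\<Sum>y\<in>s ` space F. g y x)"
      unfolding g_def by (intro sum.cong refl) simp
    finally show ?thesis .
  qed
  then have rep: "AE x in M. (\<Sum>y\<in>s ` space F. g y x) = s x" by (intro AE_I2) simp
  have sM: "s \<in> borel_measurable M"
    by (rule measurable_from_subalg[OF F borel_measurable_simple_function[OF s]])
  have sL: "s \<in> Lfun M n" by (rule Lfun_cong_AE[OF conjunct1[OF sum] sM rep])
  have "AE x in M. u (\<lambda>x. \<Sum>y\<in>s ` space F. g y x) x = u s x"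
    by (rule bounded_op_cong_AE[OF u conjunct1[OF sum] sL rep])
  then have "AE x in M. u s x = s x" using conjunct2[OF sum] rep by eventually_elim simp
  then show ?thesis using sL by simp
qed

lemma bounded_op_fixes_measurable:
  assumes u: "bounded_op M n u" and F: "subalgebra M F"
    and fixes_F: "\<And>A. A \<in> sets F \<Longrightarrow> AE x in M. u (indicator A) x = (indicator A x :: real)"
    and h: "h \<in> Lfun M n" "h \<in> borel_measurable F"
  shows "AE x in M. u h x = h x"
proof -
  have spF: "space F = space M" using F by (simp add: subalgebra_def)
  obtain S where S: "\<And>i. simple_function F (S i)" "\<And>x. x \<in> space F \<Longrightarrow> (\<lambda>i. S i x) \<longlonglongrightarrow> h x"
    "\<And>i x. x \<in> space F \<Longrightarrow> dist (S i x) 0 \<le> 2 * dist (h x) 0"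
    using borel_measurable_implies_sequence_metric[OF h(2), of 0] by blast
  have S_fixed: "S i \<in> Lfun M n \<and> (AE x in M. u (S i) x = S i x)" for i
    by (rule bounded_op_fixes_simple[OF u F fixes_F S(1)])
  have lim: "(\<lambda>i. abs_moment M n (\<lambda>x. S i x - h x)) \<longlonglongrightarrow> 0"
  proof (rule abs_moment_dominated_convergence)
    show "(\<lambda>x. 2 * \<bar>h x\<bar>) \<in> Lfun M n"
      using h(1) by (auto simp: Lfun_def abs_mult power_mult_distrib)
    show "AE x in M. (\<lambda>i. S i x) \<longlonglongrightarrow> h x" using S(2) spF by auto
    show "AE x in M. \<bar>S i x\<bar> \<le> 2 * \<bar>h x\<bar>" for i using S(3) spF by (auto simp: dist_real_def)
  qed (use S_fixed h(1) in \<open>auto simp: Lfun_borel\<close>)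
  show ?thesis
  proof (rule bounded_op_fixes_limit[OF u h(1)])
    fix e :: real assume "0 < e"
    then obtain i where "norm (abs_moment M n (\<lambda>x. S i x - h x) - 0) < e"
      using LIMSEQ_D[OF lim] by blast
    then show "\<exists>g\<in>Lfun M n. (AE x in M. u g x = g x) \<and> abs_moment M n (\<lambda>x. h x - g x) \<le> e"
      using S_fixed[of i] abs_moment_diff_commute[of M n h "S i"] abs_moment_nonneg[of M n]
      by (intro bexI[of _ "S i"]) auto
  qed
qed

section \<open>Conditional expectation on \<open>L\<^sup>n\<close>\<close>

lemma cond_exp_Lfun:
  assumes F: "subalgebra M F" and f: "f \<in> Lfun M n"
  shows "real_cond_exp M F f \<in> Lfun M n"
    and "abs_moment M n (real_cond_exp M F f) \<le> abs_moment M n f"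
proof -
  interpret sigma_finite_subalgebra M F by (rule subalgebra_sigma_finite[OF F])
  have fi: "integrable M f" by (rule Lfun_integrable[OF f])
  have pi: "integrable M (\<lambda>x. \<bar>f x\<bar> ^ n)" by (rule Lfun_integrable_power[OF f])
  have q: "(\<lambda>x::real. \<bar>x\<bar> ^ n) \<in> borel_measurable borel" by measurable
  have ci: "integrable M (\<lambda>x. \<bar>real_cond_exp M F f x\<bar> ^ n)"
    by (rule integrable_convex_cond_exp[of f UNIV, OF fi _ _ pi convex_on_abs_power q]) simp_all
  then show "real_cond_exp M F f \<in> Lfun M n" by (simp add: Lfun_def)
  have "AE x in M. \<bar>real_cond_exp M F f x\<bar> ^ n \<le> real_cond_exp M F (\<lambda>x. \<bar>f x\<bar> ^ n) x"
    by (rule real_cond_exp_jensens_inequality(2)[of f UNIV, OF fi _ _ pi convex_on_abs_power q])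
      simp_all
  then have "abs_moment M n (real_cond_exp M F f) \<le> (\<integral>x. real_cond_exp M F (\<lambda>x. \<bar>f x\<bar> ^ n) x \<partial>M)"
    unfolding abs_moment_def by (intro integral_mono_AE ci real_cond_exp_int(1) pi)
  also have "\<dots> = abs_moment M n f"
    unfolding abs_moment_def by (rule real_cond_exp_int(2)[OF pi])
  finally show "abs_moment M n (real_cond_exp M F f) \<le> abs_moment M n f" .
qed

lemma cond_exp_bounded_idempotent:
  assumes F: "subalgebra M F"
  shows "bounded_idempotent M n (cond_exp_op M F)"
proof -
  interpret sigma_finite_subalgebra M F by (rule subalgebra_sigma_finite[OF F])
  have cong: "AE x in M. real_cond_exp M F f x = real_cond_exp M F g x"
    if "f \<in> Lfun M n" "g \<in> Lfun M n" "AE x in M. f x = g x" for f g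
    using that by (intro real_cond_exp_cong) (simp_all add: Lfun_borel)
  have lincomb: "AE x in M. real_cond_exp M F (\<lambda>y. c * f y + g y) x
      = c * real_cond_exp M F f x + real_cond_exp M F g x"
    if "f \<in> Lfun M n" "g \<in> Lfun M n" for f g c
  proof -
    have fi: "integrable M f" and gi: "integrable M g" using that by (simp_all add: Lfun_integrable)
    have "AE x in M. real_cond_exp M F (\<lambda>y. c * f y + g y) x
        = real_cond_exp M F (\<lambda>y. c * f y) x + real_cond_exp M F g x"
      using fi gi by (intro real_cond_exp_add) auto
    then show ?thesis using real_cond_exp_cmult[OF fi, of c] by eventually_elim simp
  qed
  have bound: "Lnorm M n (real_cond_exp M F f) \<le> Lnorm M n f" if "f \<in> Lfun M n" for f
    using cond_exp_Lfun(2)[OF F that] unfolding Lnorm_def abs_moment_def[symmetric]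
    by (simp add: powr_mono2 abs_moment_nonneg)
  have idem: "AE x in M. real_cond_exp M F (real_cond_exp M F f) x = real_cond_exp M F f x"
    if "f \<in> Lfun M n" for f
    using that by (intro real_cond_exp_F_meas real_cond_exp_int(1) Lfun_integrable) simp_all
  show ?thesis
    unfolding bounded_idempotent_def bounded_op_def op_eq_def cond_exp_op_def
    using cond_exp_Lfun(1)[OF F] cong lincomb bound idem by (auto intro!: exI[of _ 1])
qed

lemma idem_le_cond_exp:
  assumes F: "subalgebra M F" and G: "subalgebra M G" and FG: "sets F \<subseteq> sets G"
  shows "idem_le M n (real_cond_exp M F) (real_cond_exp M G)"
proof -
  interpret Fs: sigma_finite_subalgebra M F by (rule subalgebra_sigma_finite[OF F])
  interpret Gs: sigma_finite_subalgebra M G by (rule subalgebra_sigma_finite[OF G])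
  have GF: "subalgebra G F" using F G FG by (simp add: subalgebra_def)
  have "AE x in M. real_cond_exp M F (real_cond_exp M G f) x = real_cond_exp M F f x"
    if "integrable M f" for f
    using Fs.real_cond_exp_nested_subalg[OF G GF that] .
  moreover have "AE x in M. real_cond_exp M G (real_cond_exp M F f) x = real_cond_exp M F f x"
    if "integrable M f" for f
    using that by (intro Gs.real_cond_exp_F_meas Fs.real_cond_exp_int(1)
        measurable_from_subalg[OF GF borel_measurable_cond_exp])
  ultimately show ?thesis
    unfolding idem_le_def op_eq_def by (simp add: Lfun_integrable)
qed

lemma abs_moment_cond_exp_residual_le:
  assumes F: "subalgebra M F" and H: "H \<in> Lfun M n"
    and \<phi>: "\<phi> \<in> Lfun M n" "\<phi> \<in> borel_measurable F"
  shows "abs_moment M n (\<lambda>x. H x - real_cond_exp M F H x) \<le> 2 ^ (n + 1) * abs_moment M n (\<lambda>x. H x - \<phi> x)"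
proof -
  interpret sigma_finite_subalgebra M F by (rule subalgebra_sigma_finite[OF F])
  define d where "d = (\<lambda>x. H x - \<phi> x)"
  have dL: "d \<in> Lfun M n" unfolding d_def by (rule Lfun_diff[OF H \<phi>(1)])
  have EdL: "real_cond_exp M F d \<in> Lfun M n" by (rule cond_exp_Lfun(1)[OF F dL])
  have "AE x in M. real_cond_exp M F d x = real_cond_exp M F H x - \<phi> x"
    using real_cond_exp_diff[OF Lfun_integrable[OF H] Lfun_integrable[OF \<phi>(1)]]
      real_cond_exp_F_meas[OF Lfun_integrable[OF \<phi>(1)] \<phi>(2)]
    unfolding d_def by eventually_elim simp
  then have "AE x in M. H x - real_cond_exp M F H x = d x - real_cond_exp M F d x"
    by eventually_elim (simp add: d_def)
  then have "abs_moment M n (\<lambda>x. H x - real_cond_exp M F H x)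
      = abs_moment M n (\<lambda>x. d x - real_cond_exp M F d x)"
    using Lfun_borel[OF H] Lfun_borel[OF dL] by (intro abs_moment_cong_AE) simp_all
  also have "\<dots> \<le> 2 ^ n * (abs_moment M n d + abs_moment M n (real_cond_exp M F d))"
    by (rule abs_moment_diff_le[OF dL EdL])
  also have "\<dots> \<le> 2 ^ n * (abs_moment M n d + abs_moment M n d)"
    using cond_exp_Lfun(2)[OF F dL] by simp
  also have "\<dots> = 2 ^ (n + 1) * abs_moment M n d" by simp
  finally show ?thesis unfolding d_def .
qed

lemma abs_moment_cond_exp_diff_perturb:
  assumes F: "subalgebra M F" and G: "subalgebra M G" and f: "f \<in> Lfun M n" and t: "t \<in> Lfun M n"
  shows "abs_moment M n (\<lambda>x. real_cond_exp M F f x - real_cond_exp M G f x)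
    \<le> 2 ^ n * (abs_moment M n (\<lambda>x. real_cond_exp M F t x - real_cond_exp M G t x)
      + 2 ^ (n + 1) * abs_moment M n (\<lambda>x. f x - t x))"
proof -
  define r where "r = (\<lambda>x. f x - t x)"
  have rL: "r \<in> Lfun M n" unfolding r_def by (rule Lfun_diff[OF f t])
  have EL: "real_cond_exp M S g \<in> Lfun M n" if "subalgebra M S" "g \<in> Lfun M n" for S g
    by (rule cond_exp_Lfun(1)[OF that])
  have split: "AE x in M. real_cond_exp M S f x = real_cond_exp M S t x + real_cond_exp M S r x"
    if S: "subalgebra M S" for S
  proof -
    interpret sigma_finite_subalgebra M S by (rule subalgebra_sigma_finite[OF S])
    show ?thesis
      using real_cond_exp_add[OF Lfun_integrable[OF t] Lfun_integrable[OF rL]] by (simp add: r_def)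
  qed
  let ?dt = "\<lambda>x. real_cond_exp M F t x - real_cond_exp M G t x"
  let ?dr = "\<lambda>x. real_cond_exp M F r x - real_cond_exp M G r x"
  have dtL: "?dt \<in> Lfun M n" and drL: "?dr \<in> Lfun M n"
    using F G t rL by (auto intro!: Lfun_diff EL)
  have "abs_moment M n ?dr
      \<le> 2 ^ n * (abs_moment M n (real_cond_exp M F r) + abs_moment M n (real_cond_exp M G r))"
    using F G rL by (intro abs_moment_diff_le EL)
  also have "\<dots> \<le> 2 ^ n * (abs_moment M n r + abs_moment M n r)"
    using cond_exp_Lfun(2)[OF F rL] cond_exp_Lfun(2)[OF G rL] by (intro mult_left_mono add_mono) simp_all
  finally have dr: "abs_moment M n ?dr \<le> 2 ^ (n + 1) * abs_moment M n r" by simp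
  have "AE x in M. real_cond_exp M F f x - real_cond_exp M G f x = ?dt x + ?dr x"
    using split[OF F] split[OF G] by eventually_elim simp
  then have "abs_moment M n (\<lambda>x. real_cond_exp M F f x - real_cond_exp M G f x)
      = abs_moment M n (\<lambda>x. ?dt x + ?dr x)"
    using Lfun_borel[OF Lfun_add[OF dtL drL]] by (intro abs_moment_cong_AE) simp_all
  also have "\<dots> \<le> 2 ^ n * (abs_moment M n ?dt + abs_moment M n ?dr)"
    by (rule abs_moment_add_le[OF dtL drL])
  also have "\<dots> \<le> 2 ^ n * (abs_moment M n ?dt + 2 ^ (n + 1) * abs_moment M n r)"
    using dr by (intro mult_left_mono add_left_mono) simp_all
  finally show ?thesis unfolding r_def .
qed

end

context prob_space
begin

lemma cond_exp_pythagoras: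
  assumes G: "subalgebra M G" and h: "h \<in> Lfun M 2"
  shows "abs_moment M 2 (\<lambda>x. h x - real_cond_exp M G h x)
    = abs_moment M 2 h - abs_moment M 2 (real_cond_exp M G h)"
proof -
  interpret L2: Ln_prob_space M 2 by unfold_locales simp
  interpret sigma_finite_subalgebra M G by (rule subalgebra_sigma_finite[OF G])
  define E where "E = real_cond_exp M G h"
  have hM: "h \<in> borel_measurable M" by (rule L2.Lfun_borel[OF h])
  have h2: "integrable M (\<lambda>x. (h x)\<^sup>2)"
    using L2.Lfun_integrable_power[OF h] by simp
  have E2: "integrable M (\<lambda>x. (E x)\<^sup>2)"
    using L2.Lfun_integrable_power[OF L2.cond_exp_Lfun(1)[OF G h]] by (simp add: E_def)
  have Eh: "integrable M (\<lambda>x. E x * h x)"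
  proof (rule Bochner_Integration.integrable_bound[where f="\<lambda>x. (E x)\<^sup>2 + (h x)\<^sup>2"])
    show "AE x in M. norm (E x * h x) \<le> norm ((E x)\<^sup>2 + (h x)\<^sup>2)"
      using abs_mult_le_sum_squares by (intro AE_I2) simp
  qed (use E2 h2 hM in \<open>simp_all add: E_def\<close>)
  have "(\<integral>x. E x * h x \<partial>M) = (\<integral>x. E x * E x \<partial>M)"
    using real_cond_exp_intg(2)[OF Eh _ hM] unfolding E_def by simp
  then have cross: "(\<integral>x. E x * h x \<partial>M) = (\<integral>x. (E x)\<^sup>2 \<partial>M)"
    by (simp add: power2_eq_square)
  have "abs_moment M 2 (\<lambda>x. h x - E x) = (\<integral>x. (h x)\<^sup>2 - 2 * (E x * h x) + (E x)\<^sup>2 \<partial>M)"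
    unfolding abs_moment_def by (intro Bochner_Integration.integral_cong) (simp_all add: power2_diff)
  also have "\<dots> = (\<integral>x. (h x)\<^sup>2 \<partial>M) - 2 * (\<integral>x. E x * h x \<partial>M) + (\<integral>x. (E x)\<^sup>2 \<partial>M)"
    using h2 E2 Eh by simp
  finally show ?thesis using cross by (simp add: abs_moment_def E_def)
qed

lemma bounded_fast_L2_Cauchy_limit:
  fixes h :: "nat \<Rightarrow> 'a \<Rightarrow> real"
  assumes hM: "\<And>k. h k \<in> borel_measurable M" and hb: "\<And>k. AE x in M. \<bar>h k x\<bar> \<le> T"
    and fast: "\<And>k. abs_moment M 2 (\<lambda>x. h k x - h (Suc k) x) \<le> (1/4) ^ k"
  obtains H where "H \<in> borel_measurable M" "AE x in M. \<bar>H x\<bar> \<le> T"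
    "(\<lambda>k. abs_moment M 2 (\<lambda>x. h k x - H x)) \<longlonglongrightarrow> 0"
proof -
  interpret L2: Ln_prob_space M 2 by unfold_locales simp
  have "AE x in M. 0 \<le> T" using hb[of 0] by eventually_elim (rule order_trans[OF abs_ge_zero])
  then have T: "0 \<le> T" by simp
  have hL: "h k \<in> Lfun M 2" for k by (rule L2.Lfun_bounded[OF hM hb])
  have L1: "(\<integral>x. \<bar>h k x - h (Suc k) x\<bar> \<partial>M) \<le> (1/2) ^ k" for k
  proof (rule power2_le_imp_le)
    have "(\<integral>x. \<bar>h k x - h (Suc k) x\<bar> \<partial>M)\<^sup>2 \<le> abs_moment M 2 (\<lambda>x. h k x - h (Suc k) x)"
      using square_integral_abs_le[of "\<lambda>x. h k x - h (Suc k) x"]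
        L2.Lfun_integrable_power[OF L2.Lfun_diff[OF hL hL]] hM
      by (simp add: abs_moment_def)
    also have "\<dots> \<le> ((1/2) ^ k)\<^sup>2"
      using fast[of k] by (simp add: power2_eq_square power_mult_distrib[symmetric])
    finally show "(\<integral>x. \<bar>h k x - h (Suc k) x\<bar> \<partial>M)\<^sup>2 \<le> ((1/2) ^ k)\<^sup>2" .
  qed simp
  have "AE x in M. convergent (\<lambda>k. h k x)"
  proof (rule AE_convergent_if_summable_integral_abs_diff)
    show "integrable M (\<lambda>x. h k x - h (Suc k) x)" for k
      by (rule L2.Lfun_integrable[OF L2.Lfun_diff[OF hL hL]])
    show "summable (\<lambda>k. \<integral>x. \<bar>h k x - h (Suc k) x\<bar> \<partial>M)"
      by (rule summable_comparison_test[OF _ summable_geometric[of "1/2"]]) (use L1 in auto)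
  qed
  then have lim: "AE x in M. (\<lambda>k. h k x) \<longlonglongrightarrow> lim (\<lambda>k. h k x)"
    by eventually_elim (simp add: convergent_LIMSEQ_iff)
  have HM: "(\<lambda>x. lim (\<lambda>k. h k x)) \<in> borel_measurable M" using hM by measurable
  have "AE x in M. \<forall>k. \<bar>h k x\<bar> \<le> T" using hb by (simp add: AE_all_countable)
  then have "AE x in M. \<bar>lim (\<lambda>k. h k x)\<bar> \<le> T"
    using lim
  proof eventually_elim
    case (elim x)
    show ?case using tendsto_rabs[OF elim(2)] by (rule LIMSEQ_le_const2) (use elim(1) in blast)
  qed
  moreover have "(\<lambda>k. abs_moment M 2 (\<lambda>x. h k x - lim (\<lambda>k. h k x))) \<longlonglongrightarrow> 0"
    using hb T by (intro L2.abs_moment_dominated_convergence[OF hM HM lim L2.Lfun_bounded[of "\<lambda>x. T" T]])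
      auto
  ultimately show ?thesis using that HM by blast
qed

end

section \<open>Increasing filtrations\<close>

locale Ln_increasing_filtration = Ln_prob_space +
  fixes I :: "'i set" and le :: "'i \<Rightarrow> 'i \<Rightarrow> bool" and B :: "'i \<Rightarrow> 'a measure"
  assumes directed: "directed_set I le"
    and subalgebra_B: "\<And>i. i \<in> I \<Longrightarrow> subalgebra M (B i)"
    and mono_B: "\<And>i j. i \<in> I \<Longrightarrow> j \<in> I \<Longrightarrow> le i j \<Longrightarrow> sets (B i) \<subseteq> sets (B j)"
begin

abbreviation "B_join \<equiv> join_sa M I B"

lemma UN_sets_B_subset: "(\<Union>i\<in>I. sets (B i)) \<subseteq> sets M"
  using subalgebra_B by (auto simp: subalgebra_def)

lemma space_in_UN_sets_B: "space M \<in> (\<Union>i\<in>I. sets (B i))"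
proof -
  obtain i where "i \<in> I" using directed by (auto simp: directed_set_def)
  then show ?thesis using subalgebra_B[of i] sets.top[of "B i"] by (auto simp: subalgebra_def)
qed

lemma Int_stable_UN_sets_B: "Int_stable (\<Union>i\<in>I. sets (B i))"
proof (rule Int_stableI)
  fix a b assume "a \<in> (\<Union>i\<in>I. sets (B i))" "b \<in> (\<Union>i\<in>I. sets (B i))"
  then obtain i j where ij: "i \<in> I" "j \<in> I" "a \<in> sets (B i)" "b \<in> sets (B j)" by blast
  obtain k where k: "k \<in> I" "le i k" "le j k" using directed ij(1,2) unfolding directed_set_def by blast
  have "a \<in> sets (B k)" "b \<in> sets (B k)" using mono_B ij k by blast+
  then have "a \<inter> b \<in> sets (B k)" by blast
  then show "a \<inter> b \<in> (\<Union>i\<in>I. sets (B i))" using k(1) by blast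
qed

lemma sets_B_join: "sets B_join = sigma_sets (space M) (\<Union>i\<in>I. sets (B i))"
  unfolding join_sa_def using UN_sets_B_subset sets.sets_into_space
  by (intro sets_measure_of) blast

lemma subalgebra_B_join: "subalgebra M B_join"
proof -
  have "space B_join = space M"
    unfolding join_sa_def using UN_sets_B_subset sets.sets_into_space
    by (intro space_measure_of) blast
  then show ?thesis
    unfolding subalgebra_def sets_B_join using sets.sigma_sets_subset[OF UN_sets_B_subset] by simp
qed

lemma sets_B_subset_B_join: "i \<in> I \<Longrightarrow> sets (B i) \<subseteq> sets B_join"
  unfolding sets_B_join by (auto intro: sigma_sets.Basic)

lemma upper_bound_fixes_cond_exp_join:
  assumes u: "bounded_op M n u"
    and ub: "\<And>i. i \<in> I \<Longrightarrow> op_eq M n (u \<circ> real_cond_exp M (B i)) (real_cond_exp M (B i))"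
  shows "op_eq M n (u \<circ> real_cond_exp M B_join) (real_cond_exp M B_join)"
proof -
  have fixes_gen: "AE x in M. u (indicator A) x = (indicator A x :: real)"
    if A: "A \<in> (\<Union>i\<in>I. sets (B i))" for A
  proof -
    obtain i where i: "i \<in> I" "A \<in> sets (B i)" using A by blast
    interpret sigma_finite_subalgebra M "B i" by (rule subalgebra_sigma_finite[OF subalgebra_B[OF i(1)]])
    have indL: "(indicator A :: 'a \<Rightarrow> real) \<in> Lfun M n"
      using UN_sets_B_subset A by (intro Lfun_indicator) blast
    have E_ind: "AE x in M. real_cond_exp M (B i) (indicator A) x = (indicator A x :: real)"
      using i(2) Lfun_integrable[OF indL] by (intro real_cond_exp_F_meas) auto
    have "AE x in M. u (real_cond_exp M (B i) (indicator A)) x = u (indicator A) x"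
      by (rule bounded_op_cong_AE[OF u cond_exp_Lfun(1)[OF subalgebra_B[OF i(1)] indL] indL E_ind])
    moreover have "AE x in M. u (real_cond_exp M (B i) (indicator A)) x
        = real_cond_exp M (B i) (indicator A) x"
      using ub[OF i(1)] indL unfolding op_eq_def by auto
    ultimately show ?thesis using E_ind by eventually_elim simp
  qed
  have "AE x in M. u (real_cond_exp M B_join f) x = real_cond_exp M B_join f x"
    if f: "f \<in> Lfun M n" for f
  proof (rule bounded_op_fixes_measurable[OF u subalgebra_B_join _
        cond_exp_Lfun(1)[OF subalgebra_B_join f] borel_measurable_cond_exp])
    fix A assume "A \<in> sets B_join"
    then show "AE x in M. u (indicator A) x = indicator A x"
      using bounded_op_fixes_indicator_sigma[OF u UN_sets_B_subset Int_stable_UN_sets_B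
          space_in_UN_sets_B fixes_gen]
      unfolding sets_B_join by blast
  qed
  then show ?thesis unfolding op_eq_def by simp
qed

lemma cond_exp_join_absorbs_upper_bound:
  assumes u: "bounded_op M n u"
    and ub: "\<And>i. i \<in> I \<Longrightarrow> op_eq M n (real_cond_exp M (B i) \<circ> u) (real_cond_exp M (B i))"
  shows "op_eq M n (real_cond_exp M B_join \<circ> u) (real_cond_exp M B_join)"
  unfolding op_eq_def
proof
  interpret J: sigma_finite_subalgebra M B_join by (rule subalgebra_sigma_finite[OF subalgebra_B_join])
  fix f assume f: "f \<in> Lfun M n"
  have ufL: "u f \<in> Lfun M n" by (rule bounded_op_Lfun[OF u f])
  define g where "g x = u f x - f x" for x
  have gi: "integrable M g" unfolding g_def by (rule Lfun_integrable[OF Lfun_diff[OF ufL f]])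
  have gen: "(\<integral>x\<in>A. g x \<partial>M) = 0" if A: "A \<in> (\<Union>i\<in>I. sets (B i))" for A
  proof -
    obtain i where i: "i \<in> I" "A \<in> sets (B i)" using A by blast
    interpret sigma_finite_subalgebra M "B i" by (rule subalgebra_sigma_finite[OF subalgebra_B[OF i(1)]])
    have "AE x in M. real_cond_exp M (B i) g x = real_cond_exp M (B i) (u f) x - real_cond_exp M (B i) f x"
      unfolding g_def by (rule real_cond_exp_diff[OF Lfun_integrable[OF ufL] Lfun_integrable[OF f]])
    moreover have "AE x in M. real_cond_exp M (B i) (u f) x = real_cond_exp M (B i) f x"
      using ub[OF i(1)] f unfolding op_eq_def by auto
    ultimately have "AE x in M. real_cond_exp M (B i) g x = 0" by eventually_elim simp
    then have "(\<integral>x\<in>A. real_cond_exp M (B i) g x \<partial>M) = 0"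
      unfolding set_lebesgue_integral_def by (intro integral_eq_zero_AE) (auto elim: eventually_mono)
    then show ?thesis using real_cond_exp_intA[OF gi i(2)] by simp
  qed
  have "(\<integral>x\<in>A. g x \<partial>M) = (\<integral>x\<in>A. 0 \<partial>M)" if "A \<in> sets B_join" for A
    using set_integral_eq_0_sigma_sets[OF gi UN_sets_B_subset Int_stable_UN_sets_B _ gen] that
      gen[OF space_in_UN_sets_B] set_integral_space[OF gi]
    unfolding sets_B_join by simp
  then have "AE x in M. real_cond_exp M B_join g x = 0"
    using gi by (intro J.real_cond_exp_charact) simp_all
  moreover have "AE x in M. real_cond_exp M B_join g x
      = real_cond_exp M B_join (u f) x - real_cond_exp M B_join f x"
    unfolding g_def by (rule J.real_cond_exp_diff[OF Lfun_integrable[OF ufL] Lfun_integrable[OF f]])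
  ultimately show "AE x in M. (real_cond_exp M B_join \<circ> u) f x = real_cond_exp M B_join f x"
    by eventually_elim simp
qed

theorem is_sup_idem_cond_exp_join:
  "is_sup_idem M n (cond_exp_op M ` B ` I) (cond_exp_op M B_join)"
proof -
  have "idem_le M n (cond_exp_op M (B i)) (cond_exp_op M B_join)" if "i \<in> I" for i
    unfolding cond_exp_op_def
    by (rule idem_le_cond_exp[OF subalgebra_B[OF that] subalgebra_B_join sets_B_subset_B_join[OF that]])
  moreover have "idem_le M n (cond_exp_op M B_join) u"
    if "bounded_idempotent M n u" "\<forall>a\<in>cond_exp_op M ` B ` I. idem_le M n a u" for u
    using that upper_bound_fixes_cond_exp_join cond_exp_join_absorbs_upper_bound
    unfolding bounded_idempotent_def idem_le_def cond_exp_op_def by auto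
  ultimately show ?thesis
    unfolding is_sup_idem_def using cond_exp_bounded_idempotent[OF subalgebra_B_join] by blast
qed

end

section \<open>Completion by null sets and meets\<close>

definition null_closure_sa :: "'a measure \<Rightarrow> 'a measure \<Rightarrow> 'a measure" where
  "null_closure_sa M F = sigma (space M) (sets F \<union> null_sets M)"

lemma
  assumes F: "subalgebra M F"
  shows sets_null_closure_sa: "sets (null_closure_sa M F) = null_closure M F"
    and space_null_closure_sa: "space (null_closure_sa M F) = space M"
    and subalgebra_null_closure_sa: "subalgebra M (null_closure_sa M F)"
    and subalgebra_null_closure_sa_base: "subalgebra (null_closure_sa M F) F"
    and null_sets_subset_null_closure_sa: "null_sets M \<subseteq> sets (null_closure_sa M F)"
proof -
  have FM: "sets F \<subseteq> sets M" using F by (simp add: subalgebra_def)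
  then have P: "sets F \<union> null_sets M \<subseteq> Pow (space M)"
    using sets.sets_into_space by blast
  show sets: "sets (null_closure_sa M F) = null_closure M F"
    unfolding null_closure_sa_def null_closure_def using P by (rule sets_measure_of)
  show space: "space (null_closure_sa M F) = space M"
    unfolding null_closure_sa_def using P by (rule space_measure_of)
  have "null_closure M F \<subseteq> sets M"
    unfolding null_closure_def using FM by (intro sets.sigma_sets_subset) blast
  then show "subalgebra M (null_closure_sa M F)" unfolding subalgebra_def sets space by simp
  have "sets F \<subseteq> sets (null_closure_sa M F)" "null_sets M \<subseteq> sets (null_closure_sa M F)"
    unfolding sets null_closure_def by (auto intro: sigma_sets.Basic)
  then show "subalgebra (null_closure_sa M F) F" "null_sets M \<subseteq> sets (null_closure_sa M F)"
    using space F by (auto simp: subalgebra_def)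
qed

lemma measurable_null_closure_sa_if_AE_eq:
  fixes h g :: "'a \<Rightarrow> real"
  assumes F: "subalgebra M F" and hM: "h \<in> borel_measurable M" and gF: "g \<in> borel_measurable F"
    and ae: "AE x in M. h x = g x"
  shows "h \<in> borel_measurable (null_closure_sa M F)"
proof (rule measurableI)
  fix S :: "real set" assume S: "S \<in> sets borel"
  have gM: "g \<in> borel_measurable M" by (rule measurable_from_subalg[OF F gF])
  define N where "N = {x \<in> space M. h x \<noteq> g x}"
  have "N \<in> sets M" unfolding N_def using hM gM by measurable
  then have N: "N \<in> null_sets M" using ae unfolding N_def by (simp add: AE_iff_null)
  have "h -` S \<inter> space M \<inter> N \<in> null_sets M"
    using null_set_Int2[OF N measurable_sets[OF hM S]] by (simp add: Int_commute)
  then have "h -` S \<inter> space M \<inter> N \<in> sets (null_closure_sa M F)" "N \<in> sets (null_closure_sa M F)"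
    using N null_sets_subset_null_closure_sa[OF F] by blast+
  moreover have "g -` S \<inter> space F \<in> sets (null_closure_sa M F)"
    using measurable_sets[OF gF S] subalgebra_null_closure_sa_base[OF F]
    by (auto simp: subalgebra_def)
  moreover have "h -` S \<inter> space (null_closure_sa M F)
      = (g -` S \<inter> space F - N) \<union> (h -` S \<inter> space M \<inter> N)"
    using F unfolding N_def space_null_closure_sa[OF F] by (auto simp: subalgebra_def)
  ultimately show "h -` S \<inter> space (null_closure_sa M F) \<in> sets (null_closure_sa M F)"
    by (metis sets.Diff sets.Un)
qed simp

context
  fixes M :: "'a measure" and I :: "'i set" and C :: "'i \<Rightarrow> 'a measure"
  assumes I: "I \<noteq> {}" and C: "\<And>i. i \<in> I \<Longrightarrow> subalgebra M (C i)"
begin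

lemma
  shows sets_meet_closure_sa:
      "sets (meet_closure_sa M I C) = sigma_sets (space M) (\<Inter>i\<in>I. null_closure M (C i))"
    and space_meet_closure_sa: "space (meet_closure_sa M I C) = space M"
proof -
  obtain i where i: "i \<in> I" using I by blast
  have "(\<Inter>i\<in>I. null_closure M (C i)) \<subseteq> sets (null_closure_sa M (C i))"
    using i C[OF i] by (auto simp: sets_null_closure_sa)
  also have "\<dots> \<subseteq> Pow (space M)"
    using sets.sets_into_space space_null_closure_sa[OF C[OF i]] by blast
  finally have P: "(\<Inter>i\<in>I. null_closure M (C i)) \<subseteq> Pow (space M)" .
  show "sets (meet_closure_sa M I C) = sigma_sets (space M) (\<Inter>i\<in>I. null_closure M (C i))"
    unfolding meet_closure_sa_def using P by (rule sets_measure_of)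
  show "space (meet_closure_sa M I C) = space M"
    unfolding meet_closure_sa_def using P by (rule space_measure_of)
qed

lemma subalgebra_null_closure_sa_meet:
  assumes i: "i \<in> I"
  shows "subalgebra (null_closure_sa M (C i)) (meet_closure_sa M I C)"
proof -
  have "(\<Inter>i\<in>I. null_closure M (C i)) \<subseteq> sets (null_closure_sa M (C i))"
    using i C[OF i] by (auto simp: sets_null_closure_sa)
  then have "sigma_sets (space M) (\<Inter>i\<in>I. null_closure M (C i)) \<subseteq> sets (null_closure_sa M (C i))"
    using sets.sigma_sets_subset space_null_closure_sa[OF C[OF i]] by metis
  then show ?thesis
    unfolding subalgebra_def sets_meet_closure_sa space_meet_closure_sa
    using space_null_closure_sa[OF C[OF i]] by simp
qed

lemma subalgebra_meet_closure_sa: "subalgebra M (meet_closure_sa M I C)"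
proof -
  obtain i where i: "i \<in> I" using I by blast
  show ?thesis
    using subalgebra_null_closure_sa_meet[OF i] subalgebra_null_closure_sa[OF C[OF i]]
    by (auto simp: subalgebra_def)
qed

lemma measurable_meet_closure_sa:
  fixes h :: "'a \<Rightarrow> real"
  assumes h: "\<And>i. i \<in> I \<Longrightarrow> h \<in> borel_measurable (null_closure_sa M (C i))"
  shows "h \<in> borel_measurable (meet_closure_sa M I C)"
proof (rule measurableI)
  fix S :: "real set" assume S: "S \<in> sets borel"
  have "h -` S \<inter> space M \<in> null_closure M (C i)" if i: "i \<in> I" for i
    using measurable_sets[OF h[OF i] S]
    by (simp add: sets_null_closure_sa[OF C[OF i]] space_null_closure_sa[OF C[OF i]])
  then show "h -` S \<inter> space (meet_closure_sa M I C) \<in> sets (meet_closure_sa M I C)"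
    unfolding sets_meet_closure_sa space_meet_closure_sa by (intro sigma_sets.Basic) blast
qed simp

end

lemma Int_stable_sets_Un_null_sets:
  assumes "sets F \<subseteq> sets M"
  shows "Int_stable (sets F \<union> null_sets M)"
proof (rule Int_stableI)
  fix a b assume "a \<in> sets F \<union> null_sets M" "b \<in> sets F \<union> null_sets M"
  then show "a \<inter> b \<in> sets F \<union> null_sets M"
    using assms by (auto intro: null_set_Int1 null_set_Int2)
qed

lemma (in prob_space) cond_exp_null_closure_sa:
  assumes F: "subalgebra M F" and f: "integrable M f"
  shows "AE x in M. real_cond_exp M (null_closure_sa M F) f x = real_cond_exp M F f x"
proof -
  interpret Fs: sigma_finite_subalgebra M F by (rule subalgebra_sigma_finite[OF F])
  interpret Cs: sigma_finite_subalgebra M "null_closure_sa M F"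
    by (rule subalgebra_sigma_finite[OF subalgebra_null_closure_sa[OF F]])
  have FM: "sets F \<subseteq> sets M" using F by (simp add: subalgebra_def)
  define \<phi> where "\<phi> x = f x - real_cond_exp M F f x" for x
  have ei: "integrable M (real_cond_exp M F f)" by (rule Fs.real_cond_exp_int(1)[OF f])
  have \<phi>: "integrable M \<phi>" unfolding \<phi>_def using f ei by (rule Bochner_Integration.integrable_diff)
  have set_int: "(\<integral>x\<in>A. \<phi> x \<partial>M) = (\<integral>x\<in>A. f x \<partial>M) - (\<integral>x\<in>A. real_cond_exp M F f x \<partial>M)"
    if "A \<in> sets M" for A
    unfolding \<phi>_def using integrable_mult_indicator[OF that f] integrable_mult_indicator[OF that ei]
    by (intro set_integral_diff(2)) (simp_all add: set_integrable_def)
  have gen: "(\<integral>x\<in>A. \<phi> x \<partial>M) = 0" if A: "A \<in> sets F \<union> null_sets M" for A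
  proof (cases "A \<in> sets F")
    case True
    then show ?thesis using set_int[of A] FM Fs.real_cond_exp_intA[OF f True] by auto
  next
    case False
    then have "AE x in M. x \<notin> A" using A by (auto intro: AE_not_in)
    then have "AE x in M. indicator A x *\<^sub>R \<phi> x = 0" by eventually_elim simp
    then show ?thesis unfolding set_lebesgue_integral_def by (rule integral_eq_zero_AE)
  qed
  have "(\<integral>x. \<phi> x \<partial>M) = 0"
    unfolding \<phi>_def using f ei Fs.real_cond_exp_int(2)[OF f] by simp
  then have "(\<integral>x\<in>A. \<phi> x \<partial>M) = 0" if "A \<in> sets (null_closure_sa M F)" for A
    using set_integral_eq_0_sigma_sets[OF \<phi> _ Int_stable_sets_Un_null_sets[OF FM] _ gen] that FM
    by (auto simp: sets_null_closure_sa[OF F] null_closure_def)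
  then have "(\<integral>x\<in>A. f x \<partial>M) = (\<integral>x\<in>A. real_cond_exp M F f x \<partial>M)"
    if "A \<in> sets (null_closure_sa M F)" for A
    using that set_int[of A] subalgebra_null_closure_sa[OF F] by (auto simp: subalgebra_def)
  then show ?thesis
    using measurable_from_subalg[OF subalgebra_null_closure_sa_base[OF F] borel_measurable_cond_exp]
    by (intro Cs.real_cond_exp_charact f ei)
qed

section \<open>Decreasing filtrations\<close>

locale decreasing_filtration = prob_space +
  fixes I :: "'i set" and le :: "'i \<Rightarrow> 'i \<Rightarrow> bool" and C :: "'i \<Rightarrow> 'a measure"
  assumes directed: "directed_set I le"
    and subalgebra_C: "\<And>i. i \<in> I \<Longrightarrow> subalgebra M (C i)"
    and antimono_C: "\<And>i j. i \<in> I \<Longrightarrow> j \<in> I \<Longrightarrow> le i j \<Longrightarrow> sets (C j) \<subseteq> sets (C i)"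
begin

abbreviation "C_meet \<equiv> meet_closure_sa M I C"

lemma I_nonempty: "I \<noteq> {}"
  using directed by (simp add: directed_set_def)

lemma directed_refl: "i \<in> I \<Longrightarrow> le i i"
  using directed by (simp add: directed_set_def)

lemma directed_upper_bound:
  assumes "i \<in> I" "j \<in> I"
  obtains k where "k \<in> I" "le i k" "le j k"
  using directed assms unfolding directed_set_def by blast

lemma subalgebra_C_le: "i \<in> I \<Longrightarrow> j \<in> I \<Longrightarrow> le i j \<Longrightarrow> subalgebra (C i) (C j)"
  using antimono_C subalgebra_C by (simp add: subalgebra_def)

lemma subalgebra_C_meet: "subalgebra M C_meet"
  by (rule subalgebra_meet_closure_sa[OF I_nonempty subalgebra_C])

lemma subalgebra_C_meet_null_closure: "i \<in> I \<Longrightarrow> subalgebra (null_closure_sa M (C i)) C_meet"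
  by (rule subalgebra_null_closure_sa_meet[OF I_nonempty subalgebra_C])

lemma cond_exp_C_meet_tower:
  assumes i: "i \<in> I" and f: "integrable M f"
  shows "AE x in M. real_cond_exp M C_meet (real_cond_exp M (C i) f) x = real_cond_exp M C_meet f x"
proof -
  interpret K: sigma_finite_subalgebra M C_meet by (rule subalgebra_sigma_finite[OF subalgebra_C_meet])
  have "AE x in M. real_cond_exp M C_meet (real_cond_exp M (C i) f) x
      = real_cond_exp M C_meet (real_cond_exp M (null_closure_sa M (C i)) f) x"
    using cond_exp_null_closure_sa[OF subalgebra_C[OF i] f]
    by (intro K.real_cond_exp_cong) (auto elim: eventually_mono)
  moreover have "AE x in M. real_cond_exp M C_meet (real_cond_exp M (null_closure_sa M (C i)) f) x
      = real_cond_exp M C_meet f x"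
    by (rule K.real_cond_exp_nested_subalg[OF subalgebra_null_closure_sa[OF subalgebra_C[OF i]]
          subalgebra_C_meet_null_closure[OF i] f])
  ultimately show ?thesis by eventually_elim simp
qed

lemma cond_exp_C_fixes_C_meet:
  assumes i: "i \<in> I" and f: "integrable M f"
  shows "AE x in M. real_cond_exp M (C i) (real_cond_exp M C_meet f) x = real_cond_exp M C_meet f x"
proof -
  interpret K: sigma_finite_subalgebra M C_meet by (rule subalgebra_sigma_finite[OF subalgebra_C_meet])
  interpret N: sigma_finite_subalgebra M "null_closure_sa M (C i)"
    by (rule subalgebra_sigma_finite[OF subalgebra_null_closure_sa[OF subalgebra_C[OF i]]])
  have Ei: "integrable M (real_cond_exp M C_meet f)" by (rule K.real_cond_exp_int(1)[OF f])
  have "AE x in M. real_cond_exp M (C i) (real_cond_exp M C_meet f) x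
      = real_cond_exp M (null_closure_sa M (C i)) (real_cond_exp M C_meet f) x"
    using cond_exp_null_closure_sa[OF subalgebra_C[OF i] Ei] by (auto elim: eventually_mono)
  moreover have "AE x in M. real_cond_exp M (null_closure_sa M (C i)) (real_cond_exp M C_meet f) x
      = real_cond_exp M C_meet f x"
    by (rule N.real_cond_exp_F_meas[OF Ei
          measurable_from_subalg[OF subalgebra_C_meet_null_closure[OF i] borel_measurable_cond_exp]])
  ultimately show ?thesis by eventually_elim simp
qed

lemma cond_exp_C_pythagoras:
  assumes i: "i \<in> I" and j: "j \<in> I" "le i j"
    and f: "f \<in> borel_measurable M" "AE x in M. \<bar>f x\<bar> \<le> T"
  shows "abs_moment M 2 (\<lambda>x. real_cond_exp M (C i) f x - real_cond_exp M (C j) f x)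
    = abs_moment M 2 (real_cond_exp M (C i) f) - abs_moment M 2 (real_cond_exp M (C j) f)"
proof -
  interpret L2: Ln_prob_space M 2 by unfold_locales simp
  interpret Cj: sigma_finite_subalgebra M "C j" by (rule subalgebra_sigma_finite[OF subalgebra_C[OF j(1)]])
  define Ei where "Ei = real_cond_exp M (C i) f"
  have "Ei \<in> borel_measurable M" unfolding Ei_def by simp
  then have EiL: "Ei \<in> Lfun M 2"
    unfolding Ei_def by (rule L2.Lfun_bounded[OF _ cond_exp_abs_le_const[OF subalgebra_C[OF i] f]])
  have "integrable M f" using f by (intro integrable_const_bound[where B=T]) auto
  then have tower: "AE x in M. real_cond_exp M (C j) Ei x = real_cond_exp M (C j) f x"
    unfolding Ei_def
    by (rule Cj.real_cond_exp_nested_subalg[OF subalgebra_C[OF i] subalgebra_C_le[OF i j]])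
  have "abs_moment M 2 (\<lambda>x. Ei x - real_cond_exp M (C j) f x)
      = abs_moment M 2 (\<lambda>x. Ei x - real_cond_exp M (C j) Ei x)"
    using tower by (intro abs_moment_cong_AE) (auto simp: Ei_def elim: eventually_mono)
  also have "\<dots> = abs_moment M 2 Ei - abs_moment M 2 (real_cond_exp M (C j) Ei)"
    by (rule cond_exp_pythagoras[OF subalgebra_C[OF j(1)] EiL])
  also have "abs_moment M 2 (real_cond_exp M (C j) Ei) = abs_moment M 2 (real_cond_exp M (C j) f)"
    using tower by (intro abs_moment_cong_AE) simp_all
  finally show ?thesis unfolding Ei_def .
qed

lemma cond_exp_C_fast_chain:
  assumes f: "f \<in> borel_measurable M" "AE x in M. \<bar>f x\<bar> \<le> T"
  obtains s where "\<And>k. s k \<in> I" "\<And>k. le (s k) (s (Suc k))"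
    "\<And>k j. j \<in> I \<Longrightarrow> le (s k) j \<Longrightarrow>
      abs_moment M 2 (\<lambda>x. real_cond_exp M (C (s k)) f x - real_cond_exp M (C j) f x) \<le> (1/4) ^ k"
proof -
  define a where "a i = abs_moment M 2 (real_cond_exp M (C i) f)" for i
  have pyth: "abs_moment M 2 (\<lambda>x. real_cond_exp M (C i) f x - real_cond_exp M (C j) f x) = a i - a j"
    if "i \<in> I" "j \<in> I" "le i j" for i j
    unfolding a_def by (rule cond_exp_C_pythagoras[OF that f])
  have bdd: "bdd_below (a ` I)" by (rule bdd_belowI[where m=0]) (auto simp: a_def abs_moment_nonneg)
  have "a j \<le> a i" if "i \<in> I" "j \<in> I" "le i j" for i j
    using pyth[OF that] abs_moment_nonneg[of M 2] by (metis diff_ge_0_iff_ge)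
  then obtain s where s: "\<And>k. s k \<in> I" "\<And>k. le (s k) (s (Suc k))"
    "\<And>k. a (s k) < Inf (a ` I) + (1/4) ^ k"
    using directed_set_chain_approaching_Inf[OF directed _ bdd, of "\<lambda>k. (1/4) ^ k"] by auto
  moreover have
      "abs_moment M 2 (\<lambda>x. real_cond_exp M (C (s k)) f x - real_cond_exp M (C j) f x) \<le> (1/4) ^ k"
    if j: "j \<in> I" "le (s k) j" for k j
    using pyth[OF s(1) j] s(3)[of k] cInf_lower[OF _ bdd, of "a j"] j(1) by simp
  ultimately show ?thesis using that by blast
qed

lemma cond_exp_L2_net_limit:
  assumes f: "f \<in> borel_measurable M" "AE x in M. \<bar>f x\<bar> \<le> T"
  obtains H where "H \<in> borel_measurable M" "AE x in M. \<bar>H x\<bar> \<le> T"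
    "\<And>e. 0 < e \<Longrightarrow>
      \<exists>i\<in>I. \<forall>j\<in>I. le i j \<longrightarrow> abs_moment M 2 (\<lambda>x. real_cond_exp M (C j) f x - H x) \<le> e"
proof -
  interpret L2: Ln_prob_space M 2 by unfold_locales simp
  define E where "E i = real_cond_exp M (C i) f" for i
  have EM: "E i \<in> borel_measurable M" for i unfolding E_def by simp
  have Eb: "AE x in M. \<bar>E i x\<bar> \<le> T" if "i \<in> I" for i
    unfolding E_def by (rule cond_exp_abs_le_const[OF subalgebra_C[OF that] f])
  have EL: "E j \<in> Lfun M 2" if "j \<in> I" for j by (rule L2.Lfun_bounded[OF EM Eb[OF that]])
  obtain s where s: "\<And>k. s k \<in> I" "\<And>k. le (s k) (s (Suc k))"
    and close: "\<And>k j. j \<in> I \<Longrightarrow> le (s k) j \<Longrightarrow> abs_moment M 2 (\<lambda>x. E (s k) x - E j x) \<le> (1/4) ^ k"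
    using cond_exp_C_fast_chain[OF f] unfolding E_def by blast
  obtain H where H: "H \<in> borel_measurable M" "AE x in M. \<bar>H x\<bar> \<le> T"
    "(\<lambda>k. abs_moment M 2 (\<lambda>x. E (s k) x - H x)) \<longlonglongrightarrow> 0"
    using bounded_fast_L2_Cauchy_limit[of "\<lambda>k. E (s k)" T] EM Eb[OF s(1)] close[OF s(1,2)] by blast
  have HL: "H \<in> Lfun M 2" by (rule L2.Lfun_bounded[OF H(1,2)])
  have "\<exists>i\<in>I. \<forall>j\<in>I. le i j \<longrightarrow> abs_moment M 2 (\<lambda>x. E j x - H x) \<le> e" if e: "0 < e" for e
  proof -
    have "(\<lambda>k. 4 * (abs_moment M 2 (\<lambda>x. E (s k) x - H x) + (1/4) ^ k)) \<longlonglongrightarrow> 4 * (0 + 0)"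
      by (intro tendsto_intros H(3) LIMSEQ_power_zero) simp
    then obtain k where k: "4 * (abs_moment M 2 (\<lambda>x. E (s k) x - H x) + (1/4) ^ k) < e"
      using order_tendstoD(2)[of _ 0 sequentially e] e by (auto simp: eventually_sequentially)
    have "abs_moment M 2 (\<lambda>x. E j x - H x) \<le> e" if j: "j \<in> I" "le (s k) j" for j
    proof -
      have "abs_moment M 2 (\<lambda>x. E j x - H x)
          = abs_moment M 2 (\<lambda>x. (E j x - E (s k) x) + (E (s k) x - H x))"
        by simp
      also have "\<dots> \<le> 2\<^sup>2 * (abs_moment M 2 (\<lambda>x. E j x - E (s k) x)
          + abs_moment M 2 (\<lambda>x. E (s k) x - H x))"
        using EL[OF j(1)] EL[OF s(1)] HL by (intro L2.abs_moment_add_le L2.Lfun_diff)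
      also have "\<dots> \<le> 4 * ((1/4) ^ k + abs_moment M 2 (\<lambda>x. E (s k) x - H x))"
        using close[OF j] abs_moment_diff_commute[of M 2 "E j" "E (s k)"] by simp
      finally show ?thesis using k by simp
    qed
    then show ?thesis using s(1) by blast
  qed
  then show ?thesis using that H(1,2) unfolding E_def by blast
qed

end

locale Ln_decreasing_filtration = Ln_prob_space + decreasing_filtration
begin

lemma idem_le_cond_exp_meet:
  assumes i: "i \<in> I"
  shows "idem_le M n (real_cond_exp M C_meet) (real_cond_exp M (C i))"
  unfolding idem_le_def op_eq_def
  using cond_exp_C_meet_tower[OF i] cond_exp_C_fixes_C_meet[OF i] by (simp add: Lfun_integrable)

lemma net_limit_measurable_C_meet:
  assumes f: "f \<in> Lfun M n" and H: "H \<in> Lfun M n"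
    and conv: "\<And>e. 0 < e \<Longrightarrow>
      \<exists>i\<in>I. \<forall>j\<in>I. le i j \<longrightarrow> abs_moment M n (\<lambda>x. real_cond_exp M (C j) f x - H x) \<le> e"
  shows "H \<in> borel_measurable C_meet"
proof -
  have EL: "real_cond_exp M F f \<in> Lfun M n" if "subalgebra M F" for F
    by (rule cond_exp_Lfun(1)[OF that f])
  have fixed: "AE x in M. H x = real_cond_exp M (C i) H x" if i: "i \<in> I" for i
  proof -
    have "AE x in M. H x - real_cond_exp M (C i) H x = 0"
    proof (rule AE_eq_0_if_abs_moment_arbitrarily_small[where c="2 ^ (n + 1)"])
      show "(\<lambda>x. H x - real_cond_exp M (C i) H x) \<in> Lfun M n"
        by (rule Lfun_diff[OF H cond_exp_Lfun(1)[OF subalgebra_C[OF i] H]])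
      fix e :: real assume "0 < e"
      then obtain i0 where i0: "i0 \<in> I"
        "\<And>j. j \<in> I \<Longrightarrow> le i0 j \<Longrightarrow> abs_moment M n (\<lambda>x. real_cond_exp M (C j) f x - H x) \<le> e"
        using conv by blast
      obtain j where j: "j \<in> I" "le i0 j" "le i j" using directed_upper_bound[OF i0(1) i] by blast
      have "real_cond_exp M (C j) f \<in> borel_measurable (C i)"
        by (rule measurable_from_subalg[OF subalgebra_C_le[OF i j(1,3)] borel_measurable_cond_exp])
      then have "abs_moment M n (\<lambda>x. H x - real_cond_exp M (C i) H x)
          \<le> 2 ^ (n + 1) * abs_moment M n (\<lambda>x. H x - real_cond_exp M (C j) f x)"
        by (rule abs_moment_cond_exp_residual_le[OF subalgebra_C[OF i] H EL[OF subalgebra_C[OF j(1)]]])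
      also have "\<dots> \<le> 2 ^ (n + 1) * e"
        using i0(2)[OF j(1,2)] abs_moment_diff_commute[of M n H] by simp
      finally show "abs_moment M n (\<lambda>x. H x - real_cond_exp M (C i) H x) \<le> 2 ^ (n + 1) * e" .
    qed
    then show ?thesis by eventually_elim simp
  qed
  show ?thesis
  proof (rule measurable_meet_closure_sa[OF I_nonempty subalgebra_C])
    show "H \<in> borel_measurable (null_closure_sa M (C i))" if "i \<in> I" for i
      using subalgebra_C[OF that] Lfun_borel[OF H] borel_measurable_cond_exp fixed[OF that]
      by (rule measurable_null_closure_sa_if_AE_eq)
  qed
qed

lemma net_limit_eq_cond_exp_meet:
  assumes f: "f \<in> Lfun M n" and H: "H \<in> Lfun M n"
    and conv: "\<And>e. 0 < e \<Longrightarrow>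
      \<exists>i\<in>I. \<forall>j\<in>I. le i j \<longrightarrow> abs_moment M n (\<lambda>x. real_cond_exp M (C j) f x - H x) \<le> e"
  shows "AE x in M. H x = real_cond_exp M C_meet f x"
proof -
  interpret K: sigma_finite_subalgebra M C_meet by (rule subalgebra_sigma_finite[OF subalgebra_C_meet])
  have EL: "real_cond_exp M F f \<in> Lfun M n" if "subalgebra M F" for F
    by (rule cond_exp_Lfun(1)[OF that f])
  have E_H: "AE x in M. real_cond_exp M C_meet H x = H x"
    by (rule K.real_cond_exp_F_meas[OF Lfun_integrable[OF H] net_limit_measurable_C_meet[OF f H conv]])
  have "AE x in M. H x - real_cond_exp M C_meet f x = 0"
  proof (rule AE_eq_0_if_abs_moment_arbitrarily_small[where c=1])
    show "(\<lambda>x. H x - real_cond_exp M C_meet f x) \<in> Lfun M n"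
      by (rule Lfun_diff[OF H EL[OF subalgebra_C_meet]])
    fix e :: real assume "0 < e"
    then obtain i where i: "i \<in> I" "abs_moment M n (\<lambda>x. real_cond_exp M (C i) f x - H x) \<le> e"
      using conv directed_refl by blast
    define d where "d = (\<lambda>x. H x - real_cond_exp M (C i) f x)"
    have dL: "d \<in> Lfun M n" unfolding d_def by (rule Lfun_diff[OF H EL[OF subalgebra_C[OF i(1)]]])
    have "AE x in M. real_cond_exp M C_meet d x
        = real_cond_exp M C_meet H x - real_cond_exp M C_meet (real_cond_exp M (C i) f) x"
      unfolding d_def
      using Lfun_integrable[OF H] Lfun_integrable[OF EL[OF subalgebra_C[OF i(1)]]]
      by (rule K.real_cond_exp_diff)
    then have "AE x in M. H x - real_cond_exp M C_meet f x = real_cond_exp M C_meet d x"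
      using E_H cond_exp_C_meet_tower[OF i(1) Lfun_integrable[OF f]] by eventually_elim simp
    then have "abs_moment M n (\<lambda>x. H x - real_cond_exp M C_meet f x)
        = abs_moment M n (real_cond_exp M C_meet d)"
      using Lfun_borel[OF H] by (intro abs_moment_cong_AE) simp_all
    also have "\<dots> \<le> abs_moment M n d" by (rule cond_exp_Lfun(2)[OF subalgebra_C_meet dL])
    also have "\<dots> \<le> e" using i(2) abs_moment_diff_commute[of M n H] by (simp add: d_def)
    finally show "abs_moment M n (\<lambda>x. H x - real_cond_exp M C_meet f x) \<le> 1 * e" by simp
  qed
  then show ?thesis by eventually_elim simp
qed

lemma cond_exp_net_converges_bounded:
  assumes f: "f \<in> borel_measurable M" "AE x in M. \<bar>f x\<bar> \<le> T" and e: "0 < e"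
  shows "\<exists>i\<in>I. \<forall>j\<in>I. le i j \<longrightarrow>
    abs_moment M n (\<lambda>x. real_cond_exp M (C j) f x - real_cond_exp M C_meet f x) \<le> e"
proof -
  obtain H where H: "H \<in> borel_measurable M" "AE x in M. \<bar>H x\<bar> \<le> T"
    "\<And>e. 0 < e \<Longrightarrow>
      \<exists>i\<in>I. \<forall>j\<in>I. le i j \<longrightarrow> abs_moment M 2 (\<lambda>x. real_cond_exp M (C j) f x - H x) \<le> e"
    using cond_exp_L2_net_limit[OF f] by blast
  have conv: "\<exists>i\<in>I. \<forall>j\<in>I. le i j \<longrightarrow> abs_moment M n (\<lambda>x. real_cond_exp M (C j) f x - H x) \<le> e'"
    if e': "0 < e'" for e'
  proof -
    obtain \<eta> where \<eta>: "0 < \<eta>" "\<And>y. y \<in> borel_measurable M \<Longrightarrow> AE x in M. \<bar>y x\<bar> \<le> 2 * T \<Longrightarrow>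
        abs_moment M 2 y \<le> \<eta> \<Longrightarrow> abs_moment M n y \<le> e'"
      using abs_moment_small_if_bounded_L2_small[OF e'] by blast
    obtain i where i: "i \<in> I"
      "\<And>j. j \<in> I \<Longrightarrow> le i j \<Longrightarrow> abs_moment M 2 (\<lambda>x. real_cond_exp M (C j) f x - H x) \<le> \<eta>"
      using H(3)[OF \<eta>(1)] by blast
    have "abs_moment M n (\<lambda>x. real_cond_exp M (C j) f x - H x) \<le> e'" if j: "j \<in> I" "le i j" for j
    proof (rule \<eta>(2)[OF _ _ i(2)[OF j]])
      show "(\<lambda>x. real_cond_exp M (C j) f x - H x) \<in> borel_measurable M" using H(1) by simp
      show "AE x in M. \<bar>real_cond_exp M (C j) f x - H x\<bar> \<le> 2 * T"
        using cond_exp_abs_le_const[OF subalgebra_C[OF j(1)] f] H(2) by eventually_elim simp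
    qed
    then show ?thesis using i(1) by blast
  qed
  have "AE x in M. H x = real_cond_exp M C_meet f x"
    by (rule net_limit_eq_cond_exp_meet[OF Lfun_bounded[OF f] Lfun_bounded[OF H(1,2)] conv])
  then have "abs_moment M n (\<lambda>x. real_cond_exp M (C j) f x - real_cond_exp M C_meet f x)
      = abs_moment M n (\<lambda>x. real_cond_exp M (C j) f x - H x)" for j
    using H(1) by (intro abs_moment_cong_AE) (auto elim: eventually_mono)
  then show ?thesis using conv[OF e] by simp
qed

theorem cond_exp_net_converges:
  assumes f: "f \<in> Lfun M n" and e: "0 < e"
  shows "\<exists>i\<in>I. \<forall>j\<in>I. le i j \<longrightarrow>
    abs_moment M n (\<lambda>x. real_cond_exp M (C j) f x - real_cond_exp M C_meet f x) \<le> e"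
proof -
  define t where "t m x = max (- real m) (min (real m) (f x))" for m x
  have "(\<lambda>m. abs_moment M n (\<lambda>x. t m x - f x)) \<longlonglongrightarrow> 0"
    unfolding t_def by (rule abs_moment_truncation_tendsto[OF f])
  then obtain m where m: "abs_moment M n (\<lambda>x. t m x - f x) < e / (4 * 4 ^ n)"
    using order_tendstoD(2)[of _ 0 sequentially "e / (4 * 4 ^ n)"] e
    by (auto simp: eventually_sequentially)
  have tM: "t m \<in> borel_measurable M" unfolding t_def using Lfun_borel[OF f] by measurable
  have tb: "AE x in M. \<bar>t m x\<bar> \<le> real m" unfolding t_def by (intro AE_I2) (simp add: abs_le_iff)
  obtain i where i: "i \<in> I" "\<And>j. j \<in> I \<Longrightarrow> le i j \<Longrightarrow>
      abs_moment M n (\<lambda>x. real_cond_exp M (C j) (t m) x - real_cond_exp M C_meet (t m) x)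
        \<le> e / (2 * 2 ^ n)"
    using cond_exp_net_converges_bounded[OF tM tb, of "e / (2 * 2 ^ n)"] e by auto
  have four: "(4::real) ^ n = 2 ^ n * 2 ^ n" by (simp add: power_mult_distrib[symmetric])
  have "abs_moment M n (\<lambda>x. real_cond_exp M (C j) f x - real_cond_exp M C_meet f x) \<le> e"
    if j: "j \<in> I" "le i j" for j
  proof -
    have "abs_moment M n (\<lambda>x. real_cond_exp M (C j) f x - real_cond_exp M C_meet f x)
        \<le> 2 ^ n * (abs_moment M n (\<lambda>x. real_cond_exp M (C j) (t m) x - real_cond_exp M C_meet (t m) x)
          + 2 ^ (n + 1) * abs_moment M n (\<lambda>x. f x - t m x))"
      by (rule abs_moment_cond_exp_diff_perturb[OF subalgebra_C[OF j(1)] subalgebra_C_meet f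
            Lfun_bounded[OF tM tb]])
    also have "\<dots> \<le> 2 ^ n * (e / (2 * 2 ^ n) + 2 ^ (n + 1) * (e / (4 * 4 ^ n)))"
      using i(2)[OF j] m abs_moment_diff_commute[of M n "t m" f]
      by (intro mult_left_mono add_mono) simp_all
    also have "\<dots> = e" by (simp add: four field_simps)
    finally show ?thesis .
  qed
  then show ?thesis using i(1) by blast
qed

lemma lower_bound_absorbs_cond_exp_meet:
  assumes u: "bounded_op M n u"
    and lb: "\<And>i. i \<in> I \<Longrightarrow> op_eq M n (u \<circ> real_cond_exp M (C i)) u"
  shows "op_eq M n (u \<circ> real_cond_exp M C_meet) u"
  unfolding op_eq_def
proof
  fix f assume f: "f \<in> Lfun M n"
  obtain K where K: "0 \<le> K" "\<And>g. g \<in> Lfun M n \<Longrightarrow> abs_moment M n (u g) \<le> K * abs_moment M n g"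
    using bounded_op_abs_moment_le[OF u] by blast
  have EL: "real_cond_exp M F f \<in> Lfun M n" if "subalgebra M F" for F
    by (rule cond_exp_Lfun(1)[OF that f])
  have "AE x in M. u f x - u (real_cond_exp M C_meet f) x = 0"
  proof (rule AE_eq_0_if_abs_moment_arbitrarily_small[where c=K])
    show "(\<lambda>x. u f x - u (real_cond_exp M C_meet f) x) \<in> Lfun M n"
      by (intro Lfun_diff bounded_op_Lfun[OF u] f EL subalgebra_C_meet)
    fix e :: real assume "0 < e"
    then obtain i where i: "i \<in> I"
      "abs_moment M n (\<lambda>x. real_cond_exp M (C i) f x - real_cond_exp M C_meet f x) \<le> e"
      using cond_exp_net_converges[OF f] directed_refl by blast
    define d where "d = (\<lambda>x. real_cond_exp M (C i) f x - real_cond_exp M C_meet f x)"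
    have dL: "d \<in> Lfun M n" unfolding d_def by (intro Lfun_diff EL subalgebra_C i(1) subalgebra_C_meet)
    have "AE x in M. u (real_cond_exp M (C i) f) x = u f x"
      using lb[OF i(1)] f unfolding op_eq_def by auto
    moreover have "AE x in M. u d x = u (real_cond_exp M (C i) f) x - u (real_cond_exp M C_meet f) x"
      unfolding d_def by (intro bounded_op_diff[OF u] EL subalgebra_C i(1) subalgebra_C_meet)
    ultimately have "AE x in M. u f x - u (real_cond_exp M C_meet f) x = u d x"
      by eventually_elim simp
    then have "abs_moment M n (\<lambda>x. u f x - u (real_cond_exp M C_meet f) x) = abs_moment M n (u d)"
      using Lfun_borel[OF bounded_op_Lfun[OF u f]] Lfun_borel[OF bounded_op_Lfun[OF u dL]]
        Lfun_borel[OF bounded_op_Lfun[OF u EL[OF subalgebra_C_meet]]]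
      by (intro abs_moment_cong_AE) simp_all
    also have "\<dots> \<le> K * abs_moment M n d" by (rule K(2)[OF dL])
    also have "\<dots> \<le> K * e" using i(2) K(1) unfolding d_def by (rule mult_left_mono)
    finally show "abs_moment M n (\<lambda>x. u f x - u (real_cond_exp M C_meet f) x) \<le> K * e" .
  qed
  then show "AE x in M. (u \<circ> real_cond_exp M C_meet) f x = u f x" by eventually_elim simp
qed

lemma cond_exp_meet_fixes_lower_bound:
  assumes u: "bounded_op M n u"
    and lb: "\<And>i. i \<in> I \<Longrightarrow> op_eq M n (real_cond_exp M (C i) \<circ> u) u"
  shows "op_eq M n (real_cond_exp M C_meet \<circ> u) u"
  unfolding op_eq_def
proof
  interpret K: sigma_finite_subalgebra M C_meet by (rule subalgebra_sigma_finite[OF subalgebra_C_meet])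
  fix f assume f: "f \<in> Lfun M n"
  have ufL: "u f \<in> Lfun M n" by (rule bounded_op_Lfun[OF u f])
  have "u f \<in> borel_measurable C_meet"
  proof (rule measurable_meet_closure_sa[OF I_nonempty subalgebra_C])
    show "u f \<in> borel_measurable (null_closure_sa M (C i))" if i: "i \<in> I" for i
    proof (rule measurable_null_closure_sa_if_AE_eq[OF subalgebra_C[OF i] Lfun_borel[OF ufL]
          borel_measurable_cond_exp])
      show "AE x in M. u f x = real_cond_exp M (C i) (u f) x"
        using lb[OF i] f unfolding op_eq_def by (auto elim: eventually_mono)
    qed
  qed
  then show "AE x in M. (real_cond_exp M C_meet \<circ> u) f x = u f x"
    using K.real_cond_exp_F_meas[OF Lfun_integrable[OF ufL]] by simp
qed

theorem is_inf_idem_cond_exp_meet: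
  "is_inf_idem M n (cond_exp_op M ` C ` I) (cond_exp_op M C_meet)"
proof -
  have "idem_le M n (cond_exp_op M C_meet) (cond_exp_op M (C i))" if "i \<in> I" for i
    unfolding cond_exp_op_def by (rule idem_le_cond_exp_meet[OF that])
  moreover have "idem_le M n u (cond_exp_op M C_meet)"
    if "bounded_idempotent M n u" "\<forall>a\<in>cond_exp_op M ` C ` I. idem_le M n u a" for u
    using that lower_bound_absorbs_cond_exp_meet cond_exp_meet_fixes_lower_bound
    unfolding bounded_idempotent_def idem_le_def cond_exp_op_def by auto
  ultimately show ?thesis
    unfolding is_inf_idem_def using cond_exp_bounded_idempotent[OF subalgebra_C_meet] by blast
qed

end

theorem proposition4p23:
  fixes M :: "'a::polish_space measure" and n :: nat
    and I :: "'i set" and le :: "'i \<Rightarrow> 'i \<Rightarrow> bool"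
    and B C :: "'i \<Rightarrow> 'a measure"
  assumes "prob_space M"
    and "space M = UNIV" and "sets M = sets borel"
    and "n \<ge> 1"
    and "directed_set I le"
  shows "((\<forall>i\<in>I. subalgebra M (B i)) \<and>
         (\<forall>i\<in>I. \<forall>j\<in>I. le i j \<longrightarrow> sets (B i) \<subseteq> sets (B j)) \<longrightarrow>
           is_sup_idem M n (cond_exp_op M ` B ` I) (cond_exp_op M (join_sa M I B))) \<and>
         ((\<forall>i\<in>I. subalgebra M (C i)) \<and>
         (\<forall>i\<in>I. \<forall>j\<in>I. le i j \<longrightarrow> sets (C j) \<subseteq> sets (C i)) \<longrightarrow>
           is_inf_idem M n (cond_exp_op M ` C ` I) (cond_exp_op M (meet_closure_sa M I C)))"
proof -
  interpret Ln_prob_space M n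
    using assms(1,4) by (simp add: Ln_prob_space_def Ln_prob_space_axioms_def)
  have "is_sup_idem M n (cond_exp_op M ` B ` I) (cond_exp_op M (join_sa M I B))"
    if "\<forall>i\<in>I. subalgebra M (B i)" "\<forall>i\<in>I. \<forall>j\<in>I. le i j \<longrightarrow> sets (B i) \<subseteq> sets (B j)"
  proof -
    interpret Ln_increasing_filtration M n I le B
      using assms(5) that by unfold_locales auto
    show ?thesis by (rule is_sup_idem_cond_exp_join)
  qed
  moreover have "is_inf_idem M n (cond_exp_op M ` C ` I) (cond_exp_op M (meet_closure_sa M I C))"
    if "\<forall>i\<in>I. subalgebra M (C i)" "\<forall>i\<in>I. \<forall>j\<in>I. le i j \<longrightarrow> sets (C j) \<subseteq> sets (C i)"
  proof -
    interpret Ln_decreasing_filtration M n I le C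
      using assms(5) that by unfold_locales auto
    show ?thesis by (rule is_inf_idem_cond_exp_meet)
  qed
  ultimately show ?thesis by blast
qed

end
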